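(* In the setting described in the context, with all standing assumptions in force, for every $i\in\{1,\dots,N\}$: $$\lim_{t\to\infty}\|\mathbf x_{(i,:)}^t-\bar{\mathbf s}^t\|=0,\qquad \sum_{t=0}^\infty\gamma^t\|\mathbf x_{(i,:)}^t-\bar{\mathbf s}^t\|<\infty,\qquad \sum_{t=0}^\infty\|\mathbf x_{(i,:)}^t-\bar{\mathbf s}^t\|^2<\infty.$$
   Context: Problem. Let $N,B,d\ge1$. A vector $\mathbf x\in\mathbb R^{dB}$ is partitioned into blocks $\mathbf x=(\mathbf x_1,\dots,\mathbf x_B)$ with $\mathbf x_\ell\in\mathbb R^d$, and $\nabla_\ell$ denotes the partial gradient with respect to block $\ell$. Problem (P) is $$\min_{\mathbf x}\ U(\mathbf x)=\sum_{i=1}^Nf_i(\mathbf x)+\sum_{\ell=1}^B r_\ell(\mathbf x_\ell)\quad\text{s.t. }\mathbf x_\ell\in\mathcal K_\ell,\ \ell=1,\dots,B,$$ with $\mathcal K=\mathcal K_1\times\dots\times\mathcal K_B$. Problem assumptions: - each $\mathcal K_\ell\subseteq\mathbb R^d$ is nonempty, closed and convex; - each $f_i:\mathbb R^{dB}\to\mathbb R$ is $C^1$ on an open set containing $\mathcal K$, and $\nabla f_i$ is $L_i$-Lipschitz continuous and bounded on $\mathcal K$; - each $r_\ell:\mathbb R^d\to\mathbb R$ is convex with bounded subgradients on $\mathcal K_\ell$; - $U$ is coercive on $\mathcal K$. Network. $\mathcal G=(\{1,\dots,N\},\mathcal E)$ is a fixed, strongly connected digraph containing all self-loops. The in-neighbor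 set of $i$ is $\mathcal N_i=\{j:(j,i)\in\mathcal E\}$. Block selection. At each iteration $t\ge0$, agent $i$ picks $\ell_i^t\in\{1,\dots,B\}$. For each $i$ there is a finite $T_i>0$ with $\bigcup_{\tau=0}^{T_i-1}\{\ell_i^{t+\tau}\}=\{1,\dots,B\}$ for all $t\ge0$. Define $\mathcal N_{i,\ell}^t=\{j\in\mathcal N_i:\ell_j^t=\ell\}\cup\{i\}$ and $\mathcal E_\ell^t=\{(j,i)\in\mathcal E:j\in\mathcal N_{i,\ell}^t\}$. Weights. For each $\ell$ and $t$, $A_\ell^t=[a_{ij\ell}^t]$ satisfies $a_{ij\ell}^t>\kappa$ if $(j,i)\in\mathcal E_\ell^t$, $a_{ij\ell}^t=0$ otherwise (for a fixed $\kappa>0$), and $\mathbf 1^\top A_\ell^t=\mathbf 1^\top$. Surrogates. For each $i,\ell$, $\tilde f_{i,\ell}:\mathcal K_\ell\times\mathcal K\to\mathbb R$ satisfies: - $\tilde f_{i,\ell}(\cdot;\mathbf x)$ is $C^1$ and $\tau_i$-strongly convex on $\mathcal K_\ell$ uniformly in $\mathbf x\in\mathcal K$, with $\tau_i>0$; - $\nabla\tilde f_{i,\ell}(\mathbf x_\ell;\mathbf x)=\nabla_\ell f_i(\mathbf x)$ for all $\mathbf x\in\mathcal K$, where $\nabla\tilde f_{i,\ell}$ is the gradient in the first argument and $\mathbf x_\ell$ is the $\ell$-th block of $\mathbf x$; - $\nabla\tilde f_{i,\ell}(\mathbf z;\cdot)$ is Lipschitz continuous on $\mathcal K$ uniformly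 in $\mathbf z\in\mathcal K_\ell$. For $\mathbf w\in\mathcal K$ and $\mathbf g\in\mathbb R^d$ let $$\hat f_{i,\ell}(\mathbf z;\mathbf w,\mathbf g)=\tilde f_{i,\ell}(\mathbf z;\mathbf w)+(N\mathbf g-\nabla_\ell f_i(\mathbf w))^\top(\mathbf z-\mathbf w_\ell).$$ Step sizes. $0<\gamma^t\le1$, $\gamma^{t+1}\le\gamma^t$, $\sum_t\gamma^t=\infty$, $\sum_t(\gamma^t)^2<\infty$. Algorithm. Agent $i$ holds $\mathbf x_{(i,:)}^t=(\mathbf x_{(i,\ell)}^t)_\ell$, $\mathbf y_{(i,:)}^t=(\mathbf y_{(i,\ell)}^t)_\ell$ in $\mathbb R^{dB}$ and scalars $\phi_{(i,\ell)}^t$. Initialization: $\mathbf x_{(i,:)}^0\in\mathcal K$ arbitrary, $\mathbf y_{(i,:)}^0=\nabla f_i(\mathbf x_{(i,:)}^0)$, $\phi_{(i,\ell)}^0=1$. At iteration $t$, each agent $i$: - computes $\tilde{\mathbf x}_{(i,\ell_i^t)}^t=\arg\min_{\mathbf z\in\mathcal K_{\ell_i^t}}\hat f_{i,\ell_i^t}(\mathbf z;\mathbf x_{(i,:)}^t,\mathbf y_{(i,\ell_i^t)}^t)+r_{\ell_i^t}(\mathbf z)$; - sets $\Delta\mathbf x_{(i,\ell)}^t=\tilde{\mathbf x}_{(i,\ell)}^t-\mathbf x_{(i,\ell)}^t$ if $\ell=\ell_i^t$ and $\Delta\mathbf x_{(i,\ell)}^t=\mathbf 0$ otherwise; - for every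 $\ell$ updates $$\phi_{(i,\ell)}^{t+1}=\sum_{j\in\mathcal N_{i,\ell}^t}a_{ij\ell}^t\phi_{(j,\ell)}^t,\qquad \mathbf x_{(i,\ell)}^{t+1}=\sum_{j\in\mathcal N_{i,\ell}^t}\frac{a_{ij\ell}^t\phi_{(j,\ell)}^t}{\phi_{(i,\ell)}^{t+1}}\big(\mathbf x_{(j,\ell)}^t+\gamma^t\Delta\mathbf x_{(j,\ell)}^t\big),$$ $$\mathbf y_{(i,\ell)}^{t+1}=\sum_{j\in\mathcal N_{i,\ell}^t}\frac{a_{ij\ell}^t}{\phi_{(i,\ell)}^{t+1}}\Big(\phi_{(j,\ell)}^t\mathbf y_{(j,\ell)}^t+\nabla_\ell f_j(\mathbf x_{(j,:)}^{t+1})-\nabla_\ell f_j(\mathbf x_{(j,:)}^t)\Big).$$ Weighted average: $\bar{\mathbf s}^t=\frac1N\big(\sum_{i=1}^N\phi_{(i,\ell)}^t\mathbf x_{(i,\ell)}^t\big)_{\ell=1}^B$. *)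

theory Defs
  imports "HOL-Analysis.Analysis"
begin

text \<open>Block-structured vectors: a point of R^(dB) is an element of (real^'d)^'b,
  block l being x $ l. Agents are the elements of a finite type 'n (N = CARD('n)).\<close>

definition blockset :: "('b::finite \<Rightarrow> 'v set) \<Rightarrow> (('v::real_normed_vector)^'b) set" where
  "blockset K = {x. \<forall>l. x $ l \<in> K l}"

definition strongly_convex_with :: "'v::real_normed_vector set \<Rightarrow> real \<Rightarrow> ('v \<Rightarrow> real) \<Rightarrow> bool" where
  "strongly_convex_with S tau g \<longleftrightarrow> convex S \<and>
     (\<forall>u\<in>S. \<forall>v\<in>S. \<forall>\<theta>::real. 0 \<le> \<theta> \<and> \<theta> \<le> 1 \<longrightarrow>
        g (\<theta> *\<^sub>R u + (1 - \<theta>) *\<^sub>R v)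
          \<le> \<theta> * g u + (1 - \<theta>) * g v - tau / 2 * \<theta> * (1 - \<theta>) * (norm (u - v))\<^sup>2)"

definition bounded_subgradients_on :: "'v::real_inner set \<Rightarrow> ('v \<Rightarrow> real) \<Rightarrow> bool" where
  "bounded_subgradients_on S r \<longleftrightarrow>
     (\<exists>C. \<forall>z\<in>S. \<forall>g. (\<forall>w. r w \<ge> r z + inner g (w - z)) \<longrightarrow> norm g \<le> C)"

definition coercive_on :: "'v::real_normed_vector set \<Rightarrow> ('v \<Rightarrow> real) \<Rightarrow> bool" where
  "coercive_on S U \<longleftrightarrow> (\<forall>M. \<exists>R. \<forall>x\<in>S. norm x \<ge> R \<longrightarrow> U x \<ge> M)"

text \<open>N_{i,l}^t: in-neighbours of i (edge (j,i) means j \<rightarrow> i) selecting block l at time t, plus i.\<close>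
definition nbr :: "('n \<times> 'n) set \<Rightarrow> (nat \<Rightarrow> 'n \<Rightarrow> 'b) \<Rightarrow> nat \<Rightarrow> 'n \<Rightarrow> 'b \<Rightarrow> 'n set" where
  "nbr E sel t i l = {j. (j, i) \<in> E \<and> sel t j = l} \<union> {i}"

definition edges_blk :: "('n \<times> 'n) set \<Rightarrow> (nat \<Rightarrow> 'n \<Rightarrow> 'b) \<Rightarrow> nat \<Rightarrow> 'b \<Rightarrow> ('n \<times> 'n) set" where
  "edges_blk E sel t l = {(j, i). (j, i) \<in> E \<and> j \<in> nbr E sel t i l}"

end

theory Submission
  imports Defs
begin

text \<open>The push-sum weights phi stay between a positive constant and N, so the matrices
  a_ij phi_j / phi_i driving the x- and y-updates are row stochastic with entries bounded below on
  active edges. Every edge is active for every block within a bounded time and the graph is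
  strongly connected, so backward products of these matrices are entrywise positive over windows
  of fixed length and contract the spread of every coordinate profile geometrically. The
  phi-weighted mean of the tracking variables y is the mean gradient, which makes y bounded; by
  strong convexity of the surrogates the local steps are then bounded, and the distance of x to
  the weighted average is at most C (lam^t + sum_u lam^(t-u) gamma^u). Square summability of the
  step sizes gives the three claims.\<close>

section \<open>Convex analysis\<close>

lemma graph_not_in_rel_interior_epigraph:
  fixes f :: "'a::euclidean_space \<Rightarrow> real"
  shows "(p, f p) \<notin> rel_interior (epigraph UNIV f)"
proof
  assume "(p, f p) \<in> rel_interior (epigraph UNIV f)"
  then obtain e where e: "e > 0" "ball (p, f p) e \<inter> affine hull (epigraph UNIV f) \<subseteq> epigraph UNIV f"
    by (auto simp: rel_interior_ball)
  \<comment> \<open>the point below the graph is an affine combination of two points of the epigraph\<close>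
  define q where "q = (p, f p - e/2)"
  have "(p, f p + e/2) \<in> affine hull (epigraph UNIV f)" and "(p, f p) \<in> affine hull (epigraph UNIV f)"
    using e by (auto intro: hull_inc simp: mem_epigraph)
  hence "2 *\<^sub>R (p, f p) + (1 - 2) *\<^sub>R (p, f p + e/2) \<in> affine hull (epigraph UNIV f)"
    by (intro mem_affine[OF affine_affine_hull]) auto
  moreover have "q = 2 *\<^sub>R (p, f p) + (1 - 2) *\<^sub>R (p, f p + e/2)"
    by (simp add: q_def algebra_simps scaleR_2)
  moreover have "q \<in> ball (p, f p) e"
    using e by (simp add: q_def dist_Pair_Pair dist_real_def)
  ultimately have "q \<in> epigraph UNIV f" using e by auto
  thus False using e by (simp add: q_def mem_epigraph)
qed

lemma convex_on_UNIV_has_subgradient: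
  fixes R :: "'a::euclidean_space \<Rightarrow> real"
  assumes "convex_on UNIV R"
  obtains s where "\<And>w. R p + inner s (w - p) \<le> R w"
proof -
  obtain a where a0: "a \<noteq> 0" and supp: "\<And>z. z \<in> epigraph UNIV R \<Longrightarrow> a \<bullet> (p, R p) \<le> a \<bullet> z"
    using supporting_hyperplane_rel_boundary[OF convex_epigraphI[OF assms] _
        graph_not_in_rel_interior_epigraph]
    by (metis UNIV_I mem_epigraph order_refl)
  obtain a1 a2 where aa: "a = (a1, a2)" by (cases a)
  have key: "a1 \<bullet> p + a2 * R p \<le> a1 \<bullet> v + a2 * h" if "R v \<le> h" for v h
    using supp[of "(v, h)"] that by (simp add: mem_epigraph aa inner_Pair)
  have "a2 \<ge> 0"
    using key[of p "R p + 1"] by (simp add: algebra_simps)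
  moreover have "a2 \<noteq> 0"
  proof
    assume z: "a2 = 0"
    have "a1 \<bullet> p \<le> a1 \<bullet> (p - a1)" using key[of "p - a1" "R (p - a1)"] z by simp
    hence "a1 \<bullet> a1 \<le> 0" by (simp add: inner_diff_right)
    hence "a1 = 0" by (metis inner_gt_zero_iff not_le)
    thus False using a0 z aa by (simp add: zero_prod_def)
  qed
  ultimately have a2pos: "a2 > 0" by simp
  show thesis
  proof
    fix w
    have "a1 \<bullet> p + a2 * R p \<le> a1 \<bullet> w + a2 * R w" using key[of w "R w"] by simp
    hence "R p - (1/a2) * (a1 \<bullet> (w - p)) \<le> R w" using a2pos
      by (simp add: field_simps inner_diff_right)
    thus "R p + inner (- (1/a2) *\<^sub>R a1) (w - p) \<le> R w" by simp
  qed
qed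

lemma convex_on_above_tangent_within:
  fixes F :: "'v::real_normed_vector \<Rightarrow> real"
  assumes cv: "convex_on S F" and pS: "p \<in> S" and qS: "q \<in> S"
    and der: "(F has_derivative F') (at p within S)"
  shows "F' (q - p) \<le> F q - F p"
proof -
  define \<phi> where "\<phi> \<theta> = F (p + \<theta> *\<^sub>R (q - p))" for \<theta> :: real
  have segment: "p + \<theta> *\<^sub>R (q - p) \<in> S" if "0 \<le> \<theta>" "\<theta> \<le> 1" for \<theta>
  proof -
    have "(1 - \<theta>) *\<^sub>R p + \<theta> *\<^sub>R q \<in> S"
      using cv pS qS that by (intro convexD) (auto simp: convex_on_def)
    thus ?thesis by (simp add: algebra_simps)
  qed
  have "((\<lambda>\<theta>::real. p + \<theta> *\<^sub>R (q - p)) has_derivative (\<lambda>h. h *\<^sub>R (q - p))) (at 0 within {0..1})"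
    by (auto intro!: derivative_eq_intros)
  moreover have "(\<lambda>\<theta>. p + \<theta> *\<^sub>R (q - p)) ` {0..1} \<subseteq> S"
    using segment by auto
  hence "(F has_derivative F') (at (p + 0 *\<^sub>R (q - p)) within (\<lambda>\<theta>. p + \<theta> *\<^sub>R (q - p)) ` {0..1})"
    using has_derivative_subset[OF der] by simp
  ultimately have "(\<phi> has_derivative (\<lambda>h. F' (h *\<^sub>R (q - p)))) (at 0 within {0..1})"
    unfolding \<phi>_def by (rule has_derivative_in_compose)
  moreover have "F' (h *\<^sub>R (q - p)) = F' (q - p) * h" for h
    using der by (simp add: has_derivative_def linear_simps)
  ultimately have "(\<phi> has_field_derivative F' (q - p)) (at 0 within {0..1})"
    by (simp add: has_field_derivative_def)
  hence lim: "((\<lambda>\<theta>. (\<phi> \<theta> - \<phi> 0) / (\<theta> - 0)) \<longlongrightarrow> F' (q - p)) (at 0 within {0..1})"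
    by (simp add: has_field_derivative_iff)
  have "eventually (\<lambda>\<theta>. (\<phi> \<theta> - \<phi> 0) / (\<theta> - 0) \<le> F q - F p) (at 0 within {0..1::real})"
    unfolding eventually_at_filter
  proof (intro always_eventually allI impI)
    fix \<theta> :: real assume \<theta>: "\<theta> \<noteq> 0" "\<theta> \<in> {0..1}"
    have "F ((1 - \<theta>) *\<^sub>R p + \<theta> *\<^sub>R q) \<le> (1 - \<theta>) * F p + \<theta> * F q"
      using convex_onD[OF cv] pS qS \<theta> by auto
    hence "\<phi> \<theta> - \<phi> 0 \<le> \<theta> * (F q - F p)" by (simp add: \<phi>_def algebra_simps)
    thus "(\<phi> \<theta> - \<phi> 0) / (\<theta> - 0) \<le> F q - F p" using \<theta> by (simp add: divide_le_eq mult.commute)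
  qed
  moreover have "at (0::real) within {0..1} \<noteq> bot"
    by (simp add: at_within_Icc_at_right)
  ultimately show ?thesis using tendsto_upperbound[OF lim] by blast
qed

lemma strongly_convex_with_imp_convex_on:
  assumes "strongly_convex_with S tau F" and "0 \<le> tau"
  shows "convex_on S F"
proof (rule convex_onI)
  fix t :: real and x y assume "0 < t" "t < 1" "x \<in> S" "y \<in> S"
  with assms have "F (t *\<^sub>R y + (1 - t) *\<^sub>R x)
      \<le> t * F y + (1 - t) * F x - tau / 2 * t * (1 - t) * (norm (y - x))\<^sup>2"
    by (simp add: strongly_convex_with_def)
  moreover have "0 \<le> tau / 2 * t * (1 - t) * (norm (y - x))\<^sup>2"
    using assms(2) \<open>0 < t\<close> \<open>t < 1\<close> by simp
  ultimately show "F ((1 - t) *\<^sub>R x + t *\<^sub>R y) \<le> (1 - t) * F x + t * F y"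
    by (simp add: add.commute)
next
  show "convex S" using assms(1) by (simp add: strongly_convex_with_def)
qed

text \<open>Comparing q with the midpoint of p and q gives tau/4 * norm (q - p)^2 \<le> H p - H q, and
  the tangent inequalities at p bound H p - H q linearly in norm (q - p).\<close>
lemma strongly_convex_minimiser_dist_le:
  fixes F R :: "'v::real_inner \<Rightarrow> real"
  assumes sc: "strongly_convex_with S tau F" and tau: "tau > 0"
    and pS: "p \<in> S" and qS: "q \<in> S"
    and der: "(F has_derivative (\<lambda>h. inner g h)) (at p within S)"
    and Rcv: "convex_on UNIV R"
    and subgrad: "\<And>w. R p + inner s (w - p) \<le> R w" and s_le: "norm s \<le> Cr"
    and minimal: "\<And>z. z \<in> S \<Longrightarrow> F q + inner c (q - p) + R q \<le> F z + inner c (z - p) + R z"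
  shows "norm (q - p) \<le> 4 * (norm (g + c) + Cr) / tau"
proof -
  define D where "D = norm (q - p)"
  define H where "H z = F z + inner c (z - p) + R z" for z
  define m where "m = (1/2) *\<^sub>R p + (1 - 1/2) *\<^sub>R q"
  have cS: "convex S" using sc by (simp add: strongly_convex_with_def)
  have mS: "m \<in> S" unfolding m_def using cS pS qS by (rule convexD) auto
  have "\<And>u v \<theta>. u \<in> S \<Longrightarrow> v \<in> S \<Longrightarrow> 0 \<le> \<theta> \<Longrightarrow> \<theta> \<le> 1 \<Longrightarrow> F (\<theta> *\<^sub>R u + (1 - \<theta>) *\<^sub>R v)
      \<le> \<theta> * F u + (1 - \<theta>) * F v - tau / 2 * \<theta> * (1 - \<theta>) * (norm (u - v))\<^sup>2"
    using sc unfolding strongly_convex_with_def by blast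
  from this[OF pS qS, of "1/2"] have Fm: "F m \<le> 1/2 * F p + 1/2 * F q - tau / 8 * D\<^sup>2"
    by (simp add: m_def D_def norm_minus_commute)
  have Rm: "R m \<le> 1/2 * R p + 1/2 * R q"
    using convex_onD[OF Rcv, of "1/2" p q] unfolding m_def by simp
  have "H q \<le> H m" using minimal[OF mS] by (simp add: H_def)
  hence quadratic: "tau / 4 * D\<^sup>2 \<le> H p - H q"
    using Fm Rm by (simp add: H_def m_def inner_diff_right inner_add_right algebra_simps)
  have tanF: "inner g (q - p) \<le> F q - F p"
    using convex_on_above_tangent_within[OF strongly_convex_with_imp_convex_on[OF sc] pS qS der] tau
    by simp
  have "H p - H q \<le> inner g (p - q) + inner c (p - q) + inner s (p - q)"
    using tanF subgrad[of q] by (simp add: H_def inner_diff_right)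
  also have "\<dots> \<le> norm (g + c + s) * D"
    using norm_cauchy_schwarz[of "g + c + s" "p - q"]
    by (simp add: D_def norm_minus_commute inner_add_left)
  also have "\<dots> \<le> (norm (g + c) + Cr) * D"
    using norm_triangle_ineq[of "g + c" s] s_le by (intro mult_right_mono) (auto simp: D_def)
  finally have "tau / 4 * D\<^sup>2 \<le> (norm (g + c) + Cr) * D" using quadratic by linarith
  moreover have "0 \<le> norm (g + c) + Cr" using s_le norm_ge_zero[of s] norm_ge_zero[of "g + c"] by linarith
  ultimately have "tau / 4 * D \<le> norm (g + c) + Cr"
    by (cases "D > 0") (auto simp: D_def power2_eq_square)
  thus ?thesis using tau by (simp add: D_def field_simps)
qed

section \<open>Damped sums of step sizes\<close>

definition damped_sum :: "real \<Rightarrow> (nat \<Rightarrow> real) \<Rightarrow> nat \<Rightarrow> real" where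
  "damped_sum lam g t = lam ^ t + (\<Sum>u<t. lam ^ (t - u) * g u)"

lemma damped_sum_nonneg:
  assumes "0 \<le> lam" and "\<And>u. 0 \<le> g u"
  shows "0 \<le> damped_sum lam g t"
  using assms by (auto simp: damped_sum_def intro!: add_nonneg_nonneg sum_nonneg)

lemma damped_sum_mono:
  assumes "0 \<le> lam" and "lam \<le> lam'" and "\<And>u. 0 \<le> g u"
  shows "damped_sum lam g t \<le> damped_sum lam' g t"
  unfolding damped_sum_def
  using assms by (intro add_mono sum_mono mult_right_mono power_mono) auto

lemma sum_power_diff_le:
  fixes lam :: real
  assumes "0 \<le> lam" and "lam < 1"
  shows "(\<Sum>u<t. lam ^ (t - u)) \<le> 1 / (1 - lam)"
proof -
  have "(\<Sum>u<t. lam ^ (t - u)) = (\<Sum>u<t. (\<lambda>i. lam ^ Suc i) (t - Suc u))"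
    by (intro sum.cong) (auto simp: Suc_diff_Suc)
  also have "\<dots> = (\<Sum>u<t. lam ^ Suc u)" by (rule sum.nat_diff_reindex)
  also have "\<dots> \<le> (\<Sum>u<t. lam ^ u)"
    using assms by (intro sum_mono) (simp add: mult_left_le_one_le)
  also have "\<dots> = (1 - lam ^ t) / (1 - lam)" using assms by (simp add: sum_gp_strict)
  also have "\<dots> \<le> 1 / (1 - lam)" using assms by (intro divide_right_mono) auto
  finally show ?thesis .
qed

lemma damped_sum_const_le:
  assumes "0 \<le> lam" and "lam < 1" and "0 \<le> b"
  shows "damped_sum lam (\<lambda>_. b) t \<le> 1 + b / (1 - lam)"
proof -
  have "lam ^ t \<le> 1" using assms by (simp add: power_le_one)
  moreover have "(\<Sum>u<t. lam ^ (t - u) * b) \<le> 1 / (1 - lam) * b"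
    using mult_right_mono[OF sum_power_diff_le[OF assms(1,2)] assms(3)]
    by (simp add: sum_distrib_right)
  ultimately show ?thesis by (simp add: damped_sum_def)
qed

lemma summable_damped_convolution:
  fixes c :: "nat \<Rightarrow> real"
  assumes "0 \<le> lam" and "lam < 1" and c0: "\<And>t. 0 \<le> c t" and "summable c"
  shows "summable (\<lambda>t. \<Sum>u<t. lam ^ (t - u) * c u)"
proof (rule summable_comparison_test')
  show "summable (\<lambda>t. \<Sum>u\<le>t. c u * lam ^ (t - u))"
    using assms by (intro summable_Cauchy_product) simp_all
  fix t :: nat
  have "(\<Sum>u<t. lam ^ (t - u) * c u) \<le> (\<Sum>u\<le>t. lam ^ (t - u) * c u)"
    using assms by (intro sum_mono2) auto
  moreover have "0 \<le> (\<Sum>u<t. lam ^ (t - u) * c u)" using assms by (intro sum_nonneg) auto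
  ultimately show "norm (\<Sum>u<t. lam ^ (t - u) * c u) \<le> (\<Sum>u\<le>t. c u * lam ^ (t - u))"
    by (simp add: mult.commute)
qed

lemma damped_sum_weighted_le:
  assumes "0 \<le> lam" and g0: "\<And>t. 0 \<le> g t" and g1: "\<And>t. g t \<le> 1" and dec: "decseq g"
  shows "g t * damped_sum lam g t \<le> damped_sum lam (\<lambda>u. (g u)\<^sup>2) t"
proof -
  have "g t * lam ^ t \<le> lam ^ t" using assms by (simp add: mult_left_le_one_le)
  moreover have "g t * (\<Sum>u<t. lam ^ (t - u) * g u) \<le> (\<Sum>u<t. lam ^ (t - u) * (g u)\<^sup>2)"
    unfolding sum_distrib_left
  proof (intro sum_mono)
    fix u assume "u \<in> {..<t}"
    hence "g t \<le> g u" using dec by (simp add: decseq_def)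
    hence "g t * (lam ^ (t - u) * g u) \<le> g u * (lam ^ (t - u) * g u)"
      using assms by (intro mult_right_mono) auto
    thus "g t * (lam ^ (t - u) * g u) \<le> lam ^ (t - u) * (g u)\<^sup>2"
      by (simp add: power2_eq_square mult_ac)
  qed
  ultimately show ?thesis by (simp add: damped_sum_def distrib_left)
qed

lemma damped_sum_square_le:
  assumes "0 \<le> lam" and "lam < 1"
  shows "(damped_sum lam g t)\<^sup>2 \<le> 2 * (lam\<^sup>2) ^ t + 2 / (1 - lam) * (\<Sum>u<t. lam ^ (t - u) * (g u)\<^sup>2)"
proof -
  define w where "w u = lam ^ (t - u)" for u
  have w0: "0 \<le> w u" for u using assms by (simp add: w_def)
  have "(\<Sum>u<t. sqrt (w u) * (sqrt (w u) * g u))\<^sup>2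
      \<le> (\<Sum>u<t. (sqrt (w u))\<^sup>2) * (\<Sum>u<t. (sqrt (w u) * g u)\<^sup>2)"
    by (rule Cauchy_Schwarz_ineq_sum)
  hence "(\<Sum>u<t. w u * g u)\<^sup>2 \<le> (\<Sum>u<t. w u) * (\<Sum>u<t. w u * (g u)\<^sup>2)"
    using w0 by (simp add: power_mult_distrib mult.assoc[symmetric])
  also have "\<dots> \<le> 1 / (1 - lam) * (\<Sum>u<t. w u * (g u)\<^sup>2)"
    using sum_power_diff_le[OF assms] w0 unfolding w_def
    by (intro mult_right_mono sum_nonneg) (auto simp: w_def)
  finally have conv: "(\<Sum>u<t. w u * g u)\<^sup>2 \<le> 1 / (1 - lam) * (\<Sum>u<t. w u * (g u)\<^sup>2)" .
  have sum_sq: "(p + q)\<^sup>2 \<le> 2 * p\<^sup>2 + 2 * q\<^sup>2" for p q :: real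
    using zero_le_power2[of "p - q"] unfolding power2_sum power2_diff by linarith
  have "(damped_sum lam g t)\<^sup>2 \<le> 2 * (lam ^ t)\<^sup>2 + 2 * (\<Sum>u<t. w u * g u)\<^sup>2"
    unfolding damped_sum_def w_def by (rule sum_sq)
  also have "\<dots> \<le> 2 * (lam\<^sup>2) ^ t + 2 / (1 - lam) * (\<Sum>u<t. w u * (g u)\<^sup>2)"
    using conv by (simp add: power_mult[symmetric] mult.commute)
  finally show ?thesis by (simp add: w_def)
qed

lemma damped_sum_bound_summable:
  fixes g err :: "nat \<Rightarrow> real"
  assumes lam: "0 < lam" "lam < 1" and g0: "\<And>t. 0 < g t" and g1: "\<And>t. g t \<le> 1"
    and dec: "decseq g" and gsq: "summable (\<lambda>t. (g t)\<^sup>2)"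
    and "0 \<le> K" and err0: "\<And>t. 0 \<le> err t" and err_le: "\<And>t. err t \<le> K * damped_sum lam g t"
  shows "err \<longlonglongrightarrow> 0" and "summable (\<lambda>t. g t * err t)" and "summable (\<lambda>t. (err t)\<^sup>2)"
proof -
  have geom: "summable (\<lambda>t. lam ^ t)" and geom2: "summable (\<lambda>t. (lam\<^sup>2) ^ t)"
    using lam by (simp_all add: power_less_one_iff)
  have conv: "summable (\<lambda>t. \<Sum>u<t. lam ^ (t - u) * (g u)\<^sup>2)"
    using lam gsq by (intro summable_damped_convolution) auto
  show sq: "summable (\<lambda>t. (err t)\<^sup>2)"
  proof (rule summable_comparison_test')
    show "summable (\<lambda>t. K\<^sup>2 * (2 * (lam\<^sup>2) ^ t + 2 / (1 - lam) * (\<Sum>u<t. lam ^ (t - u) * (g u)\<^sup>2)))"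
      using geom2 conv by (intro summable_mult summable_add) auto
    fix t
    have "(err t)\<^sup>2 \<le> K\<^sup>2 * (damped_sum lam g t)\<^sup>2"
      using err_le[of t] err0[of t] by (metis power_mono power_mult_distrib)
    also have "\<dots> \<le> K\<^sup>2 * (2 * (lam\<^sup>2) ^ t + 2 / (1 - lam) * (\<Sum>u<t. lam ^ (t - u) * (g u)\<^sup>2))"
      using damped_sum_square_le lam by (intro mult_left_mono) auto
    finally show "norm ((err t)\<^sup>2) \<le> K\<^sup>2 * (2 * (lam\<^sup>2) ^ t + 2 / (1 - lam) * (\<Sum>u<t. lam ^ (t - u) * (g u)\<^sup>2))"
      by simp
  qed
  show "summable (\<lambda>t. g t * err t)"
  proof (rule summable_comparison_test')
    show "summable (\<lambda>t. K * damped_sum lam (\<lambda>u. (g u)\<^sup>2) t)"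
      using geom conv by (simp add: damped_sum_def summable_add)
    fix t
    have "g t * err t \<le> K * (g t * damped_sum lam g t)"
      using err_le[of t] g0[of t] by (simp add: mult_left_mono mult.left_commute)
    also have "\<dots> \<le> K * damped_sum lam (\<lambda>u. (g u)\<^sup>2) t"
      using damped_sum_weighted_le[of lam g t] assms by (intro mult_left_mono) (auto intro: less_imp_le)
    finally show "norm (g t * err t) \<le> K * damped_sum lam (\<lambda>u. (g u)\<^sup>2) t"
      using err0[of t] g0[of t] by simp
  qed
  have "(\<lambda>t. sqrt ((err t)\<^sup>2)) \<longlonglongrightarrow> sqrt 0"
    by (intro tendsto_real_sqrt summable_LIMSEQ_zero sq)
  thus "err \<longlonglongrightarrow> 0" using err0 by simp
qed

lemma damped_sum_bound_uniform:
  fixes F :: "'p::finite \<Rightarrow> nat \<Rightarrow> real"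
  assumes g0: "\<And>u. 0 \<le> g u"
    and bound: "\<And>p. \<exists>C lam. 0 < lam \<and> lam < 1 \<and> 0 \<le> C \<and> (\<forall>t. F p t \<le> C * damped_sum lam g t)"
  obtains C lam where "0 < lam" "lam < 1" "0 \<le> C" "\<And>p t. F p t \<le> C * damped_sum lam g t"
proof -
  obtain Cf Lf where CL: "\<And>p. 0 < Lf p \<and> Lf p < 1 \<and> 0 \<le> Cf p \<and> (\<forall>t. F p t \<le> Cf p * damped_sum (Lf p) g t)"
    using bound by metis
  define C where "C = Max (range Cf)"
  define lam where "lam = Max (range Lf)"
  have "lam \<in> range Lf" unfolding lam_def by (intro Max_in) auto
  hence lam: "0 < lam" "lam < 1" using CL by auto
  have Cf_le: "Cf p \<le> C" for p unfolding C_def by simp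
  hence C0: "0 \<le> C" using CL by (meson order_trans)
  have "F p t \<le> C * damped_sum lam g t" for p t
  proof -
    have "F p t \<le> Cf p * damped_sum (Lf p) g t" using CL by blast
    also have "\<dots> \<le> C * damped_sum lam g t"
      using CL[of p] g0 Cf_le[of p] C0 unfolding lam_def
      by (intro mult_mono damped_sum_mono damped_sum_nonneg) auto
    finally show ?thesis .
  qed
  with lam C0 show thesis using that by blast
qed

section \<open>Backward products of stochastic matrices\<close>

definition row_stochastic :: "real^'n::finite^'m::finite \<Rightarrow> bool" where
  "row_stochastic A \<longleftrightarrow> (\<forall>i j. 0 \<le> A $ i $ j) \<and> (\<forall>i. (\<Sum>j\<in>UNIV. A $ i $ j) = 1)"

text \<open>backward_prod P s t is the product P (t - 1) ** \<dots> ** P s, the identity if t \<le> s.\<close>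
fun backward_prod :: "(nat \<Rightarrow> real^'n::finite^'n) \<Rightarrow> nat \<Rightarrow> nat \<Rightarrow> real^'n^'n" where
  "backward_prod P s 0 = mat 1"
| "backward_prod P s (Suc t) = (if s \<le> t then P t ** backward_prod P s t else mat 1)"

lemma backward_prod_self [simp]: "backward_prod P s s = mat 1"
  by (cases s) auto

lemma backward_prod_split:
  assumes "u \<le> v" and "v \<le> t"
  shows "backward_prod P u t = backward_prod P v t ** backward_prod P u v"
  using assms(2)
proof (induction t)
  case (Suc t)
  show ?case
  proof (cases "v = Suc t")
    case False
    with Suc assms(1) show ?thesis by (simp add: matrix_mul_assoc)
  qed simp
qed (use assms in simp)

lemma matrix_vector_mult_sum:
  fixes A :: "real^'n::finite^'m::finite"
  shows "A *v (\<Sum>u\<in>U. w u) = (\<Sum>u\<in>U. A *v w u)"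
  using linear_sum[OF matrix_vector_mul_linear, of A w U] by (simp add: o_def)

lemma backward_prod_linear_recursion:
  assumes rec: "\<And>t. z (Suc t) = P t *v z t" and "s \<le> t"
  shows "z t = backward_prod P s t *v z s"
  using assms(2)
proof (induction t)
  case (Suc t)
  show ?case
  proof (cases "s = Suc t")
    case False
    with Suc show ?thesis by (simp add: rec matrix_vector_mul_assoc)
  qed simp
qed simp

lemma backward_prod_perturbed_recursion:
  assumes rec: "\<And>t. z (Suc t) = P t *v (z t + e t)"
  shows "z t = backward_prod P 0 t *v z 0 + (\<Sum>u<t. backward_prod P u t *v e u)"
proof (induction t)
  case (Suc t)
  have "z (Suc t) = P t *v (backward_prod P 0 t *v z 0)
                    + (\<Sum>u<t. P t *v (backward_prod P u t *v e u)) + P t *v e t"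
    by (simp add: rec Suc matrix_vector_right_distrib matrix_vector_mult_sum)
  also have "\<dots> = backward_prod P 0 (Suc t) *v z 0 + (\<Sum>u<Suc t. backward_prod P u (Suc t) *v e u)"
    by (simp add: matrix_vector_mul_assoc)
  finally show ?case .
qed simp

lemma row_stochastic_mult:
  assumes "row_stochastic A" and "row_stochastic B"
  shows "row_stochastic (A ** B)"
proof -
  have "(\<Sum>j\<in>UNIV. (A ** B) $ i $ j) = 1" for i
  proof -
    have "(\<Sum>j\<in>UNIV. (A ** B) $ i $ j) = (\<Sum>j\<in>UNIV. \<Sum>k\<in>UNIV. A $ i $ k * B $ k $ j)"
      by (simp add: matrix_matrix_mult_def)
    also have "\<dots> = (\<Sum>k\<in>UNIV. \<Sum>j\<in>UNIV. A $ i $ k * B $ k $ j)" by (rule sum.swap)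
    also have "\<dots> = (\<Sum>k\<in>UNIV. A $ i $ k * (\<Sum>j\<in>UNIV. B $ k $ j))" by (simp add: sum_distrib_left)
    finally show ?thesis using assms by (simp add: row_stochastic_def)
  qed
  moreover have "0 \<le> (A ** B) $ i $ j" for i j
    using assms by (auto simp: matrix_matrix_mult_def row_stochastic_def intro!: sum_nonneg)
  ultimately show ?thesis by (simp add: row_stochastic_def)
qed

lemma row_stochastic_backward_prod:
  assumes "\<And>t. row_stochastic (P t)"
  shows "row_stochastic (backward_prod P s t)"
proof -
  have "row_stochastic (mat 1 :: real^'n^'n)"
    by (auto simp: row_stochastic_def mat_def if_distrib cong: if_cong)
  thus ?thesis by (induction t) (auto intro: row_stochastic_mult assms)
qed

context
  fixes P :: "nat \<Rightarrow> real^'n::finite^'n" and c :: real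
  assumes nonneg: "\<And>t i j. 0 \<le> P t $ i $ j" and "0 \<le> c" and diag: "\<And>t i. c \<le> P t $ i $ i"
begin

lemma backward_prod_nonneg: "0 \<le> backward_prod P s t $ i $ j"
  by (induction t arbitrary: i j)
    (auto simp: matrix_matrix_mult_def mat_def intro!: sum_nonneg mult_nonneg_nonneg nonneg)

lemma backward_prod_entry_lower_Suc:
  assumes "s \<le> t" and "c ^ (t - s) \<le> backward_prod P s t $ k $ j" and "c \<le> P t $ i $ k"
  shows "c ^ (Suc t - s) \<le> backward_prod P s (Suc t) $ i $ j"
proof -
  have "c ^ (Suc t - s) = c * c ^ (t - s)" using assms(1) by (simp add: Suc_diff_le)
  also have "\<dots> \<le> P t $ i $ k * backward_prod P s t $ k $ j"
    using assms \<open>0 \<le> c\<close> by (intro mult_mono) auto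
  also have "\<dots> \<le> (\<Sum>m\<in>UNIV. P t $ i $ m * backward_prod P s t $ m $ j)"
    by (rule member_le_sum) (auto intro: mult_nonneg_nonneg nonneg backward_prod_nonneg)
  finally show ?thesis using assms(1) by (simp add: matrix_matrix_mult_def)
qed

lemma backward_prod_entry_lower_mono:
  assumes "s \<le> t" and "t \<le> t'" and "c ^ (t - s) \<le> backward_prod P s t $ i $ j"
  shows "c ^ (t' - s) \<le> backward_prod P s t' $ i $ j"
  using assms(2)
proof (induction t' rule: dec_induct)
  case (step n)
  show ?case by (rule backward_prod_entry_lower_Suc) (use step assms(1) diag in auto)
qed (use assms in simp)

end

text \<open>Mass travels along a path between any two nodes, one window of length T per edge.\<close>
lemma backward_prod_window_positive:
  fixes P :: "nat \<Rightarrow> real^'n::finite^'n" and E :: "('n \<times> 'n) set"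
  assumes nonneg: "\<And>t i j. 0 \<le> P t $ i $ j" and c: "0 < c"
    and active_diag: "\<And>t i. active t i i" and active: "\<And>t i j. active t i j \<Longrightarrow> c \<le> P t $ i $ j"
    and hop: "\<And>k i t. (k, i) \<in> E \<Longrightarrow> \<exists>u<T. active (t + u) i k"
    and strong: "\<And>i j. (i, j) \<in> E\<^sup>*"
  obtains W where "0 < W" and "\<And>s i j. c ^ W \<le> backward_prod P s (s + W) $ i $ j"
proof -
  have diag: "c \<le> P t $ i $ i" for t i using active active_diag by blast
  note lower_Suc = backward_prod_entry_lower_Suc[OF nonneg less_imp_le[OF c] diag]
  note lower_mono = backward_prod_entry_lower_mono[OF nonneg less_imp_le[OF c] diag]
  have path: "c ^ (n * T) \<le> backward_prod P s (s + n * T) $ i $ j" if "(j, i) \<in> E ^^ n" for n i j s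
    using that
  proof (induction n arbitrary: i)
    case (Suc n)
    from Suc.prems obtain k where jk: "(j, k) \<in> E ^^ n" and ki: "(k, i) \<in> E"
      by (rule relpow_Suc_E)
    obtain u where u: "u < T" "active (s + n * T + u) i k" using hop[OF ki] by blast
    have to_k: "c ^ (s + n * T + u - s) \<le> backward_prod P s (s + n * T + u) $ k $ j"
      by (rule lower_mono[of s "s + n * T"]) (use Suc.IH[OF jk] in auto)
    have to_i: "c ^ (Suc (s + n * T + u) - s) \<le> backward_prod P s (Suc (s + n * T + u)) $ i $ j"
      by (rule lower_Suc) (use to_k active[OF u(2)] in auto)
    have "c ^ (s + Suc n * T - s) \<le> backward_prod P s (s + Suc n * T) $ i $ j"
      by (rule lower_mono[of s "Suc (s + n * T + u)"]) (use to_i u(1) in auto)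
    thus ?case by simp
  qed (simp add: mat_def)
  have "\<exists>n. (j, i) \<in> E ^^ n" for i j using strong[of j i] by (simp add: rtrancl_power)
  define len where "len = (\<lambda>(j, i). SOME n. (j, i) \<in> E ^^ n)"
  have len: "(j, i) \<in> E ^^ len (j, i)" for i j
    using someI_ex[OF \<open>\<exists>n. (j, i) \<in> E ^^ n\<close>] by (simp add: len_def)
  define W where "W = Max (range len) * T + 1"
  have "c ^ W \<le> backward_prod P s (s + W) $ i $ j" for s i j
  proof -
    have "len (j, i) * T \<le> Max (range len) * T" by (intro mult_le_mono1) simp
    hence "s + len (j, i) * T \<le> s + W" unfolding W_def by linarith
    have "c ^ (s + W - s) \<le> backward_prod P s (s + W) $ i $ j"
      by (rule lower_mono[of s "s + len (j, i) * T"]) (use path[OF len] \<open>s + len (j, i) * T \<le> s + W\<close> in auto)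
    thus ?thesis by simp
  qed
  moreover have "0 < W" by (simp add: W_def)
  ultimately show thesis using that by blast
qed

definition spread :: "real^'n::finite \<Rightarrow> real" where
  "spread z = Max (range (($) z)) - Min (range (($) z))"

lemma spread_ge: "z $ i - z $ j \<le> spread z"
  unfolding spread_def by (intro diff_mono Max_ge Min_le) auto

lemma spread_attained:
  obtains a b where "z $ a = Max (range (($) z))" and "z $ b = Min (range (($) z))"
proof -
  have "Max (range (($) z)) \<in> range (($) z)" and "Min (range (($) z)) \<in> range (($) z)"
    by (intro Max_in Min_in; simp)+
  thus thesis using that by (metis rangeE)
qed

lemma spread_le:
  assumes "\<And>i j. z $ i - z $ j \<le> B"
  shows "spread z \<le> B"
proof -
  obtain i j where "z $ i = Max (range (($) z))" and "z $ j = Min (range (($) z))"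
    by (rule spread_attained)
  thus ?thesis using assms[of i j] by (simp add: spread_def)
qed

lemma spread_nonneg: "0 \<le> spread z"
  using spread_ge[of z i i] by simp

lemma spread_add: "spread (z + w) \<le> spread z + spread w"
proof (rule spread_le)
  fix i j
  show "(z + w) $ i - (z + w) $ j \<le> spread z + spread w"
    using spread_ge[of z i j] spread_ge[of w i j] by simp
qed

lemma spread_sum: "spread (\<Sum>u\<in>U. w u) \<le> (\<Sum>u\<in>U. spread (w u))"
proof (induction U rule: infinite_finite_induct)
  case (insert u U)
  thus ?case using spread_add[of "w u" "\<Sum>u\<in>U. w u"] by simp
qed (auto intro: spread_le)

lemma spread_le_twice_bound:
  assumes "\<And>j. \<bar>w $ j\<bar> \<le> B"
  shows "spread w \<le> 2 * B"
proof (rule spread_le)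
  fix i j
  show "w $ i - w $ j \<le> 2 * B" using abs_le_D1[OF assms[of i]] abs_le_D2[OF assms[of j]] by linarith
qed

text \<open>Each row of Q minus eta is a nonnegative vector of total mass 1 - N * eta, so two rows
  of Q *v z differ by at most that mass times the spread of z.\<close>
lemma spread_row_stochastic_le:
  fixes Q :: "real^'n::finite^'m::finite" and eta :: real
  assumes Q: "row_stochastic Q" and eta: "\<And>i j. eta \<le> Q $ i $ j"
  shows "spread (Q *v z) \<le> (1 - real CARD('n) * eta) * spread z"
proof (rule spread_le)
  obtain a b where a: "z $ a = Max (range (($) z))" and b: "z $ b = Min (range (($) z))"
    by (rule spread_attained)
  have zb: "z $ b \<le> z $ j" and za: "z $ j \<le> z $ a" for j using a b by simp_all
  have mass: "(\<Sum>j\<in>UNIV. Q $ i $ j - eta) = 1 - real CARD('n) * eta" for i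
    using Q by (simp add: row_stochastic_def sum_subtractf)
  have split: "(Q *v z) $ i = (\<Sum>j\<in>UNIV. (Q $ i $ j - eta) * z $ j) + eta * (\<Sum>j\<in>UNIV. z $ j)" for i
    by (simp add: matrix_vector_mult_def algebra_simps sum.distrib sum_subtractf sum_distrib_left)
  fix i k
  have "(\<Sum>j\<in>UNIV. (Q $ i $ j - eta) * z $ j) \<le> (\<Sum>j\<in>UNIV. (Q $ i $ j - eta) * z $ a)"
    using eta za by (intro sum_mono mult_left_mono) (auto simp: algebra_simps)
  also have "\<dots> = (1 - real CARD('n) * eta) * z $ a" by (simp add: sum_distrib_right[symmetric] mass)
  finally have upper: "(\<Sum>j\<in>UNIV. (Q $ i $ j - eta) * z $ j) \<le> (1 - real CARD('n) * eta) * z $ a" .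
  have "(1 - real CARD('n) * eta) * z $ b = (\<Sum>j\<in>UNIV. (Q $ k $ j - eta) * z $ b)"
    by (simp add: sum_distrib_right[symmetric] mass)
  also have "\<dots> \<le> (\<Sum>j\<in>UNIV. (Q $ k $ j - eta) * z $ j)"
    using eta zb by (intro sum_mono mult_left_mono) (auto simp: algebra_simps)
  finally have lower: "(1 - real CARD('n) * eta) * z $ b \<le> (\<Sum>j\<in>UNIV. (Q $ k $ j - eta) * z $ j)" .
  have "(Q *v z) $ i - (Q *v z) $ k \<le> (1 - real CARD('n) * eta) * (z $ a - z $ b)"
    using upper lower split[of i] split[of k] by (simp add: algebra_simps)
  thus "(Q *v z) $ i - (Q *v z) $ k \<le> (1 - real CARD('n) * eta) * spread z"
    using a b by (simp add: spread_def)
qed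

lemma abs_sub_convex_comb_le_spread:
  assumes w0: "\<And>j. 0 \<le> w j" and w1: "(\<Sum>j\<in>UNIV. w j) = 1"
  shows "\<bar>z $ i - (\<Sum>j\<in>UNIV. w j * z $ j)\<bar> \<le> spread z"
proof -
  have "z $ i - (\<Sum>j\<in>UNIV. w j * z $ j) = (\<Sum>j\<in>UNIV. w j * (z $ i - z $ j))"
    using w1 by (simp add: algebra_simps sum_subtractf sum_distrib_right[symmetric])
  also have "\<bar>\<dots>\<bar> \<le> (\<Sum>j\<in>UNIV. w j * spread z)"
    using w0 spread_ge[of z i] spread_ge[of z _ i]
    by (intro order_trans[OF sum_abs] sum_mono) (auto simp: abs_mult abs_le_iff intro: mult_left_mono)
  finally show ?thesis using w1 by (simp add: sum_distrib_right[symmetric])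
qed

lemma power_div_le_root_power:
  fixes rho :: real
  assumes "0 < W" and "0 < rho" and "rho < 1"
  shows "rho ^ (n div W) \<le> root W rho ^ n / rho"
proof -
  define l where "l = root W rho"
  have lW: "l ^ W = rho" and l: "0 < l" "l \<le> 1"
    unfolding l_def using assms by (simp_all add: real_root_pow_pos2)
  have "rho ^ (n div W) * rho = rho ^ (n div W) * l ^ W" by (simp add: lW)
  also have "\<dots> \<le> rho ^ (n div W) * l ^ (n mod W)"
    using assms l by (intro mult_left_mono power_decreasing) auto
  also have "\<dots> = l ^ n"
    by (metis lW div_mult_mod_eq power_add power_mult mult.commute)
  finally show ?thesis using assms unfolding l_def by (simp add: field_simps)
qed

context
  fixes P :: "nat \<Rightarrow> real^'n::finite^'n" and W :: nat and eta :: real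
  assumes stochastic: "\<And>t. row_stochastic (P t)" and W: "0 < W" and eta: "0 < eta"
    and window: "\<And>s i j. eta \<le> backward_prod P s (s + W) $ i $ j"
begin

definition contraction_factor :: real where
  "contraction_factor = max (1 - real CARD('n) * eta) (1/2)"

lemma contraction_factor_bounds: "0 < contraction_factor" "contraction_factor < 1"
  using eta by (auto simp: contraction_factor_def)

lemma spread_backward_prod_windows:
  assumes "u + k * W \<le> t"
  shows "spread (backward_prod P u t *v w) \<le> contraction_factor ^ k * spread w"
  using assms
proof (induction k arbitrary: u w)
  case 0
  have "spread (backward_prod P u t *v w) \<le> (1 - real CARD('n) * 0) * spread w"
    using row_stochastic_backward_prod[OF stochastic]
    by (intro spread_row_stochastic_le) (auto simp: row_stochastic_def)
  thus ?case by simp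
next
  case (Suc k)
  let ?w = "backward_prod P u (u + W) *v w"
  have first_window: "spread ?w \<le> contraction_factor * spread w"
  proof -
    have "spread ?w \<le> (1 - real CARD('n) * eta) * spread w"
      by (rule spread_row_stochastic_le) (auto intro: row_stochastic_backward_prod stochastic window)
    also have "\<dots> \<le> contraction_factor * spread w"
      unfolding contraction_factor_def by (intro mult_right_mono max.cobounded1 spread_nonneg)
    finally show ?thesis .
  qed
  have "backward_prod P u t *v w = backward_prod P (u + W) t *v ?w"
    using Suc.prems by (simp add: backward_prod_split[of u "u + W" t] matrix_vector_mul_assoc)
  hence "spread (backward_prod P u t *v w) = spread (backward_prod P (u + W) t *v ?w)" by simp
  also have "\<dots> \<le> contraction_factor ^ k * spread ?w"
    using Suc.prems by (intro Suc.IH) (simp add: algebra_simps)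
  also have "\<dots> \<le> contraction_factor ^ k * (contraction_factor * spread w)"
    using contraction_factor_bounds first_window by (intro mult_left_mono) auto
  finally show ?case by (simp add: mult_ac)
qed

lemma spread_backward_prod_geometric:
  assumes "u \<le> t"
  shows "spread (backward_prod P u t *v w)
           \<le> root W contraction_factor ^ (t - u) / contraction_factor * spread w"
proof -
  have "u + ((t - u) div W) * W \<le> t" using assms div_mult_mod_eq[of "t - u" W] by linarith
  hence "spread (backward_prod P u t *v w) \<le> contraction_factor ^ ((t - u) div W) * spread w"
    by (rule spread_backward_prod_windows)
  also have "\<dots> \<le> root W contraction_factor ^ (t - u) / contraction_factor * spread w"
    using power_div_le_root_power[OF W contraction_factor_bounds] spread_nonneg[of w]
    by (intro mult_right_mono) auto
  finally show ?thesis .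
qed

lemma perturbed_consensus_spread_le:
  assumes rec: "\<And>t. z (Suc t) = P t *v (z t + e t)"
    and e_le: "\<And>t j. \<bar>e t $ j\<bar> \<le> B * g t" and "0 \<le> B" and g0: "\<And>t. 0 \<le> g t"
  obtains C lam where "0 < lam" "lam < 1" "0 \<le> C" "\<And>t. spread (z t) \<le> C * damped_sum lam g t"
proof -
  define rho where "rho = contraction_factor"
  define lam where "lam = root W rho"
  define C where "C = (spread (z 0) + 2 * B) / rho"
  have rho: "0 < rho" "rho < 1" using contraction_factor_bounds by (simp_all add: rho_def)
  have lam: "0 < lam" "lam < 1" unfolding lam_def using W rho by auto
  have C0: "0 \<le> C" unfolding C_def using rho spread_nonneg[of "z 0"] \<open>0 \<le> B\<close> by simp
  have "spread (z t) \<le> C * damped_sum lam g t" for t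
  proof -
    have "spread (z t) \<le> spread (backward_prod P 0 t *v z 0)
                          + spread (\<Sum>u<t. backward_prod P u t *v e u)"
      by (subst backward_prod_perturbed_recursion[where z=z and P=P and e=e, OF rec]) (rule spread_add)
    also have "\<dots> \<le> spread (backward_prod P 0 t *v z 0)
                          + (\<Sum>u<t. spread (backward_prod P u t *v e u))"
      by (intro add_left_mono spread_sum)
    also have "\<dots> \<le> C * lam ^ t + (\<Sum>u<t. C * (lam ^ (t - u) * g u))"
    proof (intro add_mono sum_mono)
      have "spread (backward_prod P 0 t *v z 0) \<le> lam ^ t / rho * spread (z 0)"
        using spread_backward_prod_geometric[of 0 t "z 0"] by (simp add: lam_def rho_def)
      also have "\<dots> \<le> lam ^ t / rho * (spread (z 0) + 2 * B)"
        using rho lam \<open>0 \<le> B\<close> by (intro mult_left_mono) auto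
      finally show "spread (backward_prod P 0 t *v z 0) \<le> C * lam ^ t"
        by (simp add: C_def mult_ac)
      fix u assume "u \<in> {..<t}"
      have "spread (backward_prod P u t *v e u) \<le> lam ^ (t - u) / rho * spread (e u)"
        using spread_backward_prod_geometric[of u t "e u"] \<open>u \<in> {..<t}\<close>
        by (simp add: lam_def rho_def)
      also have "\<dots> \<le> lam ^ (t - u) / rho * (2 * (B * g u))"
        using spread_le_twice_bound[of "e u" "B * g u"] e_le rho lam
        by (intro mult_left_mono) auto
      also have "\<dots> \<le> C * (lam ^ (t - u) * g u)"
        using rho lam g0[of u] spread_nonneg[of "z 0"] \<open>0 \<le> B\<close>
        unfolding C_def by (simp add: field_simps mult_right_mono)
      finally show "spread (backward_prod P u t *v e u) \<le> C * (lam ^ (t - u) * g u)" .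
    qed
    finally show ?thesis by (simp add: damped_sum_def distrib_left sum_distrib_left)
  qed
  with lam C0 that show thesis by blast
qed

end

section \<open>Push-sum weights\<close>

locale push_sum_weights =
  fixes E :: "('n::finite \<times> 'n) set" and sel :: "nat \<Rightarrow> 'n \<Rightarrow> 'b::finite"
    and a :: "nat \<Rightarrow> 'b \<Rightarrow> 'n \<Rightarrow> 'n \<Rightarrow> real" and \<kappa> :: real and phi :: "nat \<Rightarrow> 'n \<Rightarrow> 'b \<Rightarrow> real"
  assumes E_loops: "\<And>i. (i, i) \<in> E"
    and E_strong: "\<And>i j. (i, j) \<in> E\<^sup>*"
    and sel_ess_cyclic: "\<And>i. \<exists>T>0. \<forall>t. {sel (t + s) i | s. s < T} = UNIV"
    and kappa_pos: "\<kappa> > 0"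
    and a_pos: "\<And>t l i j. (j, i) \<in> edges_blk E sel t l \<Longrightarrow> a t l i j > \<kappa>"
    and a_zero: "\<And>t l i j. (j, i) \<notin> edges_blk E sel t l \<Longrightarrow> a t l i j = 0"
    and a_colstoch: "\<And>t l j. (\<Sum>i\<in>UNIV. a t l i j) = 1"
    and phi0: "\<And>i l. phi 0 i l = 1"
    and phi_upd: "\<And>t i l. phi (Suc t) i l = (\<Sum>j\<in>nbr E sel t i l. a t l i j * phi t j l)"
begin

lemma mem_nbr_iff_edge: "j \<in> nbr E sel t i l \<longleftrightarrow> (j, i) \<in> edges_blk E sel t l"
  using E_loops by (auto simp: nbr_def edges_blk_def)

lemma a_nonneg: "0 \<le> a t l i j"
  using a_pos[of j i t l] a_zero[of j i t l] kappa_pos by (cases "(j, i) \<in> edges_blk E sel t l") auto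

lemma a_diag: "\<kappa> < a t l i i"
  by (rule a_pos) (simp add: mem_nbr_iff_edge[symmetric] nbr_def)

lemma kappa_lt_1: "\<kappa> < 1"
proof -
  have "a 0 undefined i i \<le> (\<Sum>i'\<in>UNIV. a 0 undefined i' i)"
    by (rule member_le_sum) (auto intro: a_nonneg)
  thus ?thesis using a_diag[of 0 undefined i] a_colstoch by simp
qed

lemma sum_nbr_eq_sum_UNIV:
  assumes "\<And>j. a t l i j = 0 \<Longrightarrow> F j = 0"
  shows "(\<Sum>j\<in>nbr E sel t i l. F j) = (\<Sum>j\<in>UNIV. F j)"
  by (rule sum.mono_neutral_left) (use assms a_zero mem_nbr_iff_edge in auto)

text \<open>The tail of an edge selects every block within its own selection period; T is the
  largest period.\<close>
lemma edges_activated: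
  obtains T where "\<And>l k i t. (k, i) \<in> E \<Longrightarrow> \<exists>u<T. (k, i) \<in> edges_blk E sel (t + u) l"
proof -
  have "\<exists>T. \<forall>t l. \<exists>u<T. sel (t + u) k = l" for k
  proof -
    obtain T where T: "\<And>t. {sel (t + s) k | s. s < T} = UNIV" using sel_ess_cyclic by blast
    have "\<exists>u<T. sel (t + u) k = l" for t l
    proof -
      have "l \<in> {sel (t + s) k | s. s < T}" using T by simp
      thus ?thesis by blast
    qed
    thus ?thesis by blast
  qed
  then obtain Tk where Tk: "\<And>k t l. \<exists>u<Tk k. sel (t + u) k = l" by metis
  define T where "T = Max (range Tk)"
  have "\<exists>u<T. (k, i) \<in> edges_blk E sel (t + u) l" if "(k, i) \<in> E" for l k i t
  proof -
    obtain u where "u < Tk k" "sel (t + u) k = l" using Tk by blast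
    moreover have "Tk k \<le> T" unfolding T_def by simp
    ultimately have "u < T" and "(k, i) \<in> edges_blk E sel (t + u) l"
      using that by (auto simp: edges_blk_def nbr_def)
    thus ?thesis by blast
  qed
  thus thesis using that by blast
qed

lemma phi_Suc: "phi (Suc t) i l = (\<Sum>j\<in>UNIV. a t l i j * phi t j l)"
  unfolding phi_upd by (rule sum_nbr_eq_sum_UNIV) simp

lemma phi_pos: "0 < phi t i l"
proof (induction t arbitrary: i)
  case (Suc t)
  have "0 < a t l i i * phi t i l" using a_diag[of t l i] kappa_pos Suc by simp
  also have "\<dots> \<le> (\<Sum>j\<in>UNIV. a t l i j * phi t j l)"
    by (rule member_le_sum) (auto intro: mult_nonneg_nonneg a_nonneg less_imp_le Suc)
  finally show ?case by (simp add: phi_Suc)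
qed (simp add: phi0)

lemma phi_nonzero [simp]: "phi t i l \<noteq> 0"
  using phi_pos[of t i l] by simp

lemma phi_sum: "(\<Sum>i\<in>UNIV. phi t i l) = real CARD('n)"
proof (induction t)
  case (Suc t)
  have "(\<Sum>i\<in>UNIV. phi (Suc t) i l) = (\<Sum>i\<in>UNIV. \<Sum>j\<in>UNIV. a t l i j * phi t j l)"
    by (simp add: phi_Suc)
  also have "\<dots> = (\<Sum>j\<in>UNIV. \<Sum>i\<in>UNIV. a t l i j * phi t j l)" by (rule sum.swap)
  also have "\<dots> = (\<Sum>j\<in>UNIV. (\<Sum>i\<in>UNIV. a t l i j) * phi t j l)" by (simp add: sum_distrib_right)
  finally show ?case using Suc by (simp add: a_colstoch)
qed (simp add: phi0)

lemma phi_le_card: "phi t i l \<le> real CARD('n)"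
  using member_le_sum[of i UNIV "\<lambda>i. phi t i l"] phi_pos phi_sum by (simp add: less_imp_le)

lemma phi_ge_power: "\<kappa> ^ t \<le> phi t i l"
proof (induction t arbitrary: i)
  case (Suc t)
  have "\<kappa> * \<kappa> ^ t \<le> a t l i i * phi t i l"
    using a_diag[of t l i] kappa_pos Suc[of i] by (intro mult_mono) auto
  also have "\<dots> \<le> (\<Sum>j\<in>UNIV. a t l i j * phi t j l)"
    by (rule member_le_sum) (auto intro: mult_nonneg_nonneg a_nonneg less_imp_le phi_pos)
  finally show ?case by (simp add: phi_Suc)
qed (simp add: phi0)

lemma window_positive:
  fixes P :: "nat \<Rightarrow> real^'n^'n" and c :: real
  assumes "\<And>t i j. 0 \<le> P t $ i $ j" and "0 < c"
    and "\<And>t i j. (j, i) \<in> edges_blk E sel t l \<Longrightarrow> c \<le> P t $ i $ j"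
  obtains W where "0 < W" and "\<And>s i j. c ^ W \<le> backward_prod P s (s + W) $ i $ j"
proof -
  obtain T where T: "\<And>l k i t. (k, i) \<in> E \<Longrightarrow> \<exists>u<T. (k, i) \<in> edges_blk E sel (t + u) l"
    by (rule edges_activated) blast
  have diag: "\<And>t i. (i, i) \<in> edges_blk E sel t l"
    using E_loops by (simp add: edges_blk_def nbr_def)
  obtain W where "0 < W" and "\<And>s i j. c ^ W \<le> backward_prod P s (s + W) $ i $ j"
    using backward_prod_window_positive[where P = P and c = c and E = E and T = T
          and active = "\<lambda>t i j. (j, i) \<in> edges_blk E sel t l",
          OF assms(1,2) diag assms(3) T[where l = l] E_strong] by metis
  thus thesis by (rule that)
qed

text \<open>After a full window the weights are at least kappa ^ W times their total mass N, before
  it at least kappa ^ t.\<close>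
lemma phi_lower_bound:
  obtains \<delta> where "0 < \<delta>" and "\<And>t i. \<delta> \<le> phi t i l"
proof -
  define A where "A t = (\<chi> i j. a t l i j)" for t
  have A_nonneg: "\<And>t i j. 0 \<le> A t $ i $ j" by (simp add: A_def a_nonneg)
  have A_edge: "\<And>t i j. (j, i) \<in> edges_blk E sel t l \<Longrightarrow> \<kappa> \<le> A t $ i $ j"
    using a_pos by (simp add: A_def less_imp_le)
  obtain W where W: "\<And>s i j. \<kappa> ^ W \<le> backward_prod A s (s + W) $ i $ j"
    using window_positive[where P = A and c = \<kappa> and l = l, OF A_nonneg kappa_pos A_edge] by metis
  have rec: "(\<chi> i. phi (Suc t) i l) = A t *v (\<chi> i. phi t i l)" for t
    by (simp add: vec_eq_iff A_def matrix_vector_mult_def phi_Suc)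
  have lower: "\<kappa> ^ W \<le> phi t i l" for t i
  proof (cases "W \<le> t")
    case True
    define s where "s = t - W"
    have "phi t i l = (\<Sum>j\<in>UNIV. backward_prod A s t $ i $ j * phi s j l)"
      using backward_prod_linear_recursion[where z = "\<lambda>t. \<chi> i. phi t i l", OF rec, of s t]
      by (simp add: s_def vec_eq_iff matrix_vector_mult_def)
    also have "\<dots> \<ge> (\<Sum>j\<in>UNIV. \<kappa> ^ W * phi s j l)"
      using W[of s i] True phi_pos by (intro sum_mono mult_right_mono) (auto simp: s_def less_imp_le)
    finally have "\<kappa> ^ W * real CARD('n) \<le> phi t i l"
      by (simp add: sum_distrib_left[symmetric] phi_sum)
    moreover have "\<kappa> ^ W \<le> \<kappa> ^ W * real CARD('n)" using kappa_pos by simp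
    ultimately show ?thesis by linarith
  next
    case False
    hence "\<kappa> ^ W \<le> \<kappa> ^ t" using kappa_pos kappa_lt_1 by (intro power_decreasing) auto
    thus ?thesis using phi_ge_power[of t i l] by linarith
  qed
  show thesis by (rule that[of "\<kappa> ^ W"]) (use kappa_pos lower in auto)
qed

definition mixing_matrix :: "'b \<Rightarrow> nat \<Rightarrow> real^'n^'n" where
  "mixing_matrix l t = (\<chi> i j. a t l i j * phi t j l / phi (Suc t) i l)"

lemma mixing_matrix_row_stochastic: "row_stochastic (mixing_matrix l t)"
proof -
  have "(\<Sum>j\<in>UNIV. a t l i j * phi t j l / phi (Suc t) i l) = 1" for i
    using phi_pos[of "Suc t" i l] by (simp add: sum_divide_distrib[symmetric] phi_Suc)
  thus ?thesis
    by (simp add: row_stochastic_def mixing_matrix_def a_nonneg phi_pos less_imp_le)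
qed

lemma mixing_matrix_window_positive:
  obtains W eta where "0 < W" and "0 < eta"
    and "\<And>s i j. eta \<le> backward_prod (mixing_matrix l) s (s + W) $ i $ j"
proof -
  obtain \<delta> where \<delta>: "0 < \<delta>" "\<And>t i. \<delta> \<le> phi t i l" by (rule phi_lower_bound[of l]) blast
  define c where "c = \<kappa> * \<delta> / real CARD('n)"
  have c: "0 < c" using kappa_pos \<delta> by (simp add: c_def)
  have entry: "c \<le> mixing_matrix l t $ i $ j" if "(j, i) \<in> edges_blk E sel t l" for t i j
  proof -
    have "\<kappa> * \<delta> \<le> a t l i j * phi t j l"
      using a_pos[OF that] \<delta> kappa_pos by (intro mult_mono) auto
    thus ?thesis unfolding c_def mixing_matrix_def
      using phi_pos[of "Suc t" i l] phi_le_card[of "Suc t" i l] a_nonneg phi_pos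
      by (simp add: frac_le less_imp_le)
  qed
  have nonneg: "0 \<le> mixing_matrix l t $ i $ j" for t i j
    using mixing_matrix_row_stochastic by (simp add: row_stochastic_def)
  obtain W where "0 < W" and W: "\<And>s i j. c ^ W \<le> backward_prod (mixing_matrix l) s (s + W) $ i $ j"
    using window_positive[where P = "mixing_matrix l" and c = c and l = l, OF nonneg c entry] by metis
  show thesis by (rule that[of W "c ^ W"]) (use \<open>0 < W\<close> W c in auto)
qed

end

section \<open>The tracking algorithm\<close>

lemma norm_le_sum_abs_components:
  fixes v :: "(real^'d::finite)^'b::finite"
  shows "norm v \<le> (\<Sum>l\<in>UNIV. \<Sum>k\<in>UNIV. \<bar>v $ l $ k\<bar>)"
proof -
  have "norm v \<le> (\<Sum>l\<in>UNIV. norm (v $ l))"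
    unfolding norm_vec_def by (rule L2_set_le_sum) simp
  also have "\<dots> \<le> (\<Sum>l\<in>UNIV. \<Sum>k\<in>UNIV. \<bar>v $ l $ k\<bar>)"
    by (intro sum_mono norm_le_l1_cart)
  finally show ?thesis .
qed

definition profile :: "('n::finite \<Rightarrow> (real^'d::finite)^'b::finite) \<Rightarrow> 'b \<Rightarrow> 'd \<Rightarrow> real^'n" where
  "profile v l k = (\<chi> j. v j $ l $ k)"

locale block_tracking = push_sum_weights E sel a \<kappa> phi
  for E :: "('n::finite \<times> 'n) set" and sel :: "nat \<Rightarrow> 'n \<Rightarrow> 'b::finite" and a \<kappa> phi +
  fixes K :: "'b \<Rightarrow> (real^'d::finite) set"
    and r :: "'b \<Rightarrow> real^'d \<Rightarrow> real"
    and gradf :: "'n \<Rightarrow> (real^'d)^'b \<Rightarrow> (real^'d)^'b"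
    and ftil :: "'n \<Rightarrow> 'b \<Rightarrow> real^'d \<Rightarrow> (real^'d)^'b \<Rightarrow> real"
    and tau :: "'n \<Rightarrow> real" and gamma :: "nat \<Rightarrow> real"
    and x y :: "nat \<Rightarrow> 'n \<Rightarrow> (real^'d)^'b" and xtil :: "nat \<Rightarrow> 'n \<Rightarrow> real^'d"
  assumes K_convex: "\<And>l. convex (K l)"
    and gradf_bdd: "\<And>i. bounded (gradf i ` blockset K)"
    and r_convex: "\<And>l. convex_on UNIV (r l)"
    and r_subgrad: "\<And>l. bounded_subgradients_on (K l) (r l)"
    and tau_pos: "\<And>i. tau i > 0"
    and ftil_sc: "\<And>i l w. w \<in> blockset K \<Longrightarrow> strongly_convex_with (K l) (tau i) (\<lambda>v. ftil i l v w)"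
    and ftil_deriv: "\<And>i l w. w \<in> blockset K \<Longrightarrow>
          ((\<lambda>v. ftil i l v w) has_derivative (\<lambda>h. inner (gradf i w $ l) h)) (at (w $ l) within K l)"
    and gamma_pos: "\<And>t. 0 < gamma t"
    and gamma_le1: "\<And>t. gamma t \<le> 1"
    and x0: "\<And>i. x 0 i \<in> blockset K"
    and y0: "\<And>i. y 0 i = gradf i (x 0 i)"
    and xtil_in: "\<And>t i. xtil t i \<in> K (sel t i)"
    and xtil_min: "\<And>t i z. z \<in> K (sel t i) \<Longrightarrow>
          ftil i (sel t i) (xtil t i) (x t i)
            + inner (real CARD('n) *\<^sub>R (y t i $ sel t i) - gradf i (x t i) $ sel t i)
                    (xtil t i - x t i $ sel t i)
            + r (sel t i) (xtil t i)
          \<le> ftil i (sel t i) z (x t i)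
            + inner (real CARD('n) *\<^sub>R (y t i $ sel t i) - gradf i (x t i) $ sel t i)
                    (z - x t i $ sel t i)
            + r (sel t i) z"
    and x_upd: "\<And>t i l. x (Suc t) i $ l =
          (\<Sum>j\<in>nbr E sel t i l. (a t l i j * phi t j l / phi (Suc t) i l) *\<^sub>R
              (x t j $ l + gamma t *\<^sub>R
                 (if l = sel t j then xtil t j - x t j $ l else 0)))"
    and y_upd: "\<And>t i l. y (Suc t) i $ l =
          (\<Sum>j\<in>nbr E sel t i l. (a t l i j / phi (Suc t) i l) *\<^sub>R
              (phi t j l *\<^sub>R (y t j $ l) + gradf j (x (Suc t) j) $ l - gradf j (x t j) $ l))"
begin

lemma x_in_blockset: "x t i \<in> blockset K"
proof (induction t arbitrary: i)
  case (Suc t)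
  have "x (Suc t) i $ l \<in> K l" for l
  proof -
    define w where "w j = a t l i j * phi t j l / phi (Suc t) i l" for j
    define v where "v j = x t j $ l + gamma t *\<^sub>R (if l = sel t j then xtil t j - x t j $ l else 0)" for j
    have "(\<Sum>j\<in>nbr E sel t i l. w j *\<^sub>R v j) \<in> K l"
    proof (rule convex_sum[OF _ K_convex])
      show "(\<Sum>j\<in>nbr E sel t i l. w j) = 1"
        using phi_upd[of t i l] phi_pos[of "Suc t" i l] by (simp add: w_def sum_divide_distrib[symmetric])
      show "0 \<le> w j" for j by (simp add: w_def a_nonneg phi_pos less_imp_le)
      show "v j \<in> K l" for j
      proof (cases "l = sel t j")
        case True
        hence "v j = (1 - gamma t) *\<^sub>R x t j $ l + gamma t *\<^sub>R xtil t j"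
          by (simp add: v_def algebra_simps)
        also have "\<dots> \<in> K l"
          using Suc xtil_in[of t j] True gamma_pos[of t] gamma_le1[of t] K_convex[of l]
          by (intro convexD) (auto simp: blockset_def)
        finally show ?thesis .
      qed (use Suc in \<open>simp add: v_def blockset_def\<close>)
    qed simp
    thus ?thesis using x_upd by (simp add: w_def v_def)
  qed
  thus ?case by (simp add: blockset_def)
qed (rule x0)

lemma gradf_component_bound:
  obtains G where "0 \<le> G" and "\<And>t j l k. \<bar>gradf j (x t j) $ l $ k\<bar> \<le> G"
proof -
  have "bounded (\<Union>i. gradf i ` blockset K)" using gradf_bdd by auto
  then obtain G where G: "\<And>i v. v \<in> blockset K \<Longrightarrow> norm (gradf i v) \<le> G"
    unfolding bounded_iff by blast
  have "\<bar>gradf j (x t j) $ l $ k\<bar> \<le> G" for t j l k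
    using component_le_norm_cart Finite_Cartesian_Product.norm_nth_le G[OF x_in_blockset]
    by (meson order_trans)
  moreover from this have "0 \<le> G" by (meson abs_ge_zero order_trans)
  ultimately show thesis using that by blast
qed

lemma y_weighted_sum:
  "(\<Sum>j\<in>UNIV. phi t j l *\<^sub>R y t j $ l) = (\<Sum>j\<in>UNIV. gradf j (x t j) $ l)"
proof (induction t)
  case (Suc t)
  define X where "X j = phi t j l *\<^sub>R y t j $ l + gradf j (x (Suc t) j) $ l - gradf j (x t j) $ l" for j
  have "phi (Suc t) i l *\<^sub>R y (Suc t) i $ l = (\<Sum>j\<in>UNIV. a t l i j *\<^sub>R X j)" for i
  proof -
    have "phi (Suc t) i l *\<^sub>R y (Suc t) i $ l = (\<Sum>j\<in>nbr E sel t i l. a t l i j *\<^sub>R X j)"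
      using phi_pos[of "Suc t" i l] by (simp add: y_upd X_def scaleR_sum_right)
    also have "\<dots> = (\<Sum>j\<in>UNIV. a t l i j *\<^sub>R X j)" by (rule sum_nbr_eq_sum_UNIV) simp
    finally show ?thesis .
  qed
  hence "(\<Sum>i\<in>UNIV. phi (Suc t) i l *\<^sub>R y (Suc t) i $ l) = (\<Sum>i\<in>UNIV. \<Sum>j\<in>UNIV. a t l i j *\<^sub>R X j)"
    by simp
  also have "\<dots> = (\<Sum>j\<in>UNIV. \<Sum>i\<in>UNIV. a t l i j *\<^sub>R X j)" by (rule sum.swap)
  also have "\<dots> = (\<Sum>j\<in>UNIV. (\<Sum>i\<in>UNIV. a t l i j) *\<^sub>R X j)" by (simp add: scaleR_sum_left)
  also have "\<dots> = (\<Sum>j\<in>UNIV. gradf j (x (Suc t) j) $ l)"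
    using Suc by (simp add: a_colstoch X_def sum.distrib sum_subtractf)
  finally show ?case .
qed (simp add: phi0 y0)

lemma y_profile_recursion:
  "profile (y (Suc t)) l k = mixing_matrix l t *v (profile (y t) l k
     + (\<chi> j. (gradf j (x (Suc t) j) $ l $ k - gradf j (x t j) $ l $ k) / phi t j l))"
  (is "_ = _ *v (_ + ?e)")
proof -
  have component: "(c *\<^sub>R (p *\<^sub>R v + g1 - g0)) $ k = c * (p * v $ k + g1 $ k - g0 $ k)"
    for c p :: real and v g1 g0 :: "real^'d" by simp
  have "y (Suc t) i $ l $ k = (\<Sum>j\<in>nbr E sel t i l. (a t l i j / phi (Suc t) i l) *
      (phi t j l * y t j $ l $ k + gradf j (x (Suc t) j) $ l $ k - gradf j (x t j) $ l $ k))" for i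
    unfolding y_upd sum_component component by (rule refl)
  also have "\<dots> i = (\<Sum>j\<in>UNIV. mixing_matrix l t $ i $ j * (profile (y t) l k + ?e) $ j)" for i
    by (subst sum_nbr_eq_sum_UNIV) (auto simp: mixing_matrix_def profile_def field_simps intro!: sum.cong)
  finally show ?thesis by (simp add: vec_eq_iff matrix_vector_mult_def profile_def)
qed

lemma x_profile_recursion:
  "profile (x (Suc t)) l k = mixing_matrix l t *v (profile (x t) l k
     + (\<chi> j. gamma t * (if l = sel t j then (xtil t j - x t j $ l) $ k else 0)))"
  (is "_ = _ *v (_ + ?e)")
proof -
  have component: "(c *\<^sub>R (v + g *\<^sub>R (if P then w else 0))) $ k = c * (v $ k + g * (if P then w $ k else 0))"
    for c g :: real and v w :: "real^'d" and P by simp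
  have "x (Suc t) i $ l $ k = (\<Sum>j\<in>nbr E sel t i l. (a t l i j * phi t j l / phi (Suc t) i l) *
      (x t j $ l $ k + gamma t * (if l = sel t j then (xtil t j - x t j $ l) $ k else 0)))" for i
    unfolding x_upd sum_component component by (rule refl)
  also have "\<dots> i = (\<Sum>j\<in>UNIV. mixing_matrix l t $ i $ j * (profile (x t) l k + ?e) $ j)" for i
    by (subst sum_nbr_eq_sum_UNIV) (auto simp: mixing_matrix_def profile_def intro!: sum.cong)
  finally show ?thesis by (simp add: vec_eq_iff matrix_vector_mult_def profile_def)
qed

lemma average_component:
  "((1 / real CARD('n)) *\<^sub>R (\<chi> l. \<Sum>j\<in>UNIV. phi t j l *\<^sub>R v j $ l)) $ l $ k
     = (1 / real CARD('n)) * (\<Sum>j\<in>UNIV. phi t j l * v j $ l $ k)"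
  by (simp add: sum_component)

lemma component_dist_average_le_spread:
  fixes v :: "'n \<Rightarrow> (real^'d)^'b"
  shows "\<bar>v i $ l $ k - (1 / real CARD('n)) * (\<Sum>j\<in>UNIV. phi t j l * v j $ l $ k)\<bar>
           \<le> spread (profile v l k)"
proof -
  have "(\<Sum>j\<in>UNIV. phi t j l / real CARD('n)) = 1" by (simp add: sum_divide_distrib[symmetric] phi_sum)
  hence "\<bar>profile v l k $ i - (\<Sum>j\<in>UNIV. phi t j l / real CARD('n) * profile v l k $ j)\<bar>
          \<le> spread (profile v l k)"
    by (intro abs_sub_convex_comb_le_spread) (simp_all add: phi_pos less_imp_le)
  thus ?thesis by (simp add: profile_def sum_distrib_left)
qed

lemma y_weighted_average_le:
  assumes "\<And>t j. \<bar>gradf j (x t j) $ l $ k\<bar> \<le> G"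
  shows "\<bar>(1 / real CARD('n)) * (\<Sum>j\<in>UNIV. phi t j l * y t j $ l $ k)\<bar> \<le> G"
proof -
  have "(\<Sum>j\<in>UNIV. phi t j l * y t j $ l $ k) = (\<Sum>j\<in>UNIV. gradf j (x t j) $ l $ k)"
    using arg_cong[OF y_weighted_sum[of t l], of "\<lambda>v. v $ k"] by (simp add: sum_component)
  also have "\<bar>\<dots>\<bar> \<le> (\<Sum>j\<in>UNIV. \<bar>gradf j (x t j) $ l $ k\<bar>)" by (rule sum_abs)
  also have "\<dots> \<le> (\<Sum>j\<in>(UNIV::'n set). G)" by (intro sum_mono assms)
  finally show ?thesis by (simp add: abs_mult field_simps)
qed

text \<open>The perturbations of the y-recursion are gradient differences divided by phi, hence
  uniformly bounded.\<close>
lemma y_spread_bounded: "\<exists>B. \<forall>t. spread (profile (y t) l k) \<le> B"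
proof -
  obtain G where G: "0 \<le> G" "\<And>t j l k. \<bar>gradf j (x t j) $ l $ k\<bar> \<le> G"
    using gradf_component_bound by metis
  obtain \<delta> where \<delta>: "0 < \<delta>" "\<And>t i. \<delta> \<le> phi t i l" by (rule phi_lower_bound[of l]) blast
  obtain W eta where win: "0 < W" "0 < eta" "\<And>s i j. eta \<le> backward_prod (mixing_matrix l) s (s + W) $ i $ j"
    using mixing_matrix_window_positive by metis
  define e where "e t = (\<chi> j. (gradf j (x (Suc t) j) $ l $ k - gradf j (x t j) $ l $ k) / phi t j l)" for t
  have e_le: "\<bar>e t $ j\<bar> \<le> 2 * G / \<delta> * 1" for t j
  proof -
    have "\<bar>gradf j (x (Suc t) j) $ l $ k - gradf j (x t j) $ l $ k\<bar> \<le> 2 * G"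
      using G(2)[of j "Suc t" l k] G(2)[of j t l k] by linarith
    hence "\<bar>e t $ j\<bar> \<le> 2 * G / phi t j l"
      using phi_pos[of t j l] by (simp add: e_def abs_divide divide_right_mono)
    also have "\<dots> \<le> 2 * G / \<delta>" using \<delta> G(1) phi_pos[of t j l] by (intro divide_left_mono) auto
    finally show ?thesis by simp
  qed
  have rec: "profile (y (Suc t)) l k = mixing_matrix l t *v (profile (y t) l k + e t)" for t
    unfolding e_def by (rule y_profile_recursion)
  have "0 \<le> 2 * G / \<delta>" using G(1) \<delta> by simp
  then obtain C lam where C: "0 < lam" "lam < 1" "0 \<le> C"
    "\<And>t. spread (profile (y t) l k) \<le> C * damped_sum lam (\<lambda>_. 1) t"
    using perturbed_consensus_spread_le[where P = "mixing_matrix l" and g = "\<lambda>_. 1",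
        OF mixing_matrix_row_stochastic win rec e_le] by (metis zero_le_one)
  have "spread (profile (y t) l k) \<le> C * (1 + 1 / (1 - lam))" for t
    using C(1-3) by (intro order_trans[OF C(4)] mult_left_mono damped_sum_const_le) auto
  thus ?thesis by blast
qed

lemma y_component_bounded: "\<exists>Y. \<forall>t i. \<bar>y t i $ l $ k\<bar> \<le> Y"
proof -
  obtain G where G: "\<And>t j. \<bar>gradf j (x t j) $ l $ k\<bar> \<le> G"
    using gradf_component_bound by metis
  obtain B where B: "\<And>t. spread (profile (y t) l k) \<le> B" using y_spread_bounded by blast
  have "\<bar>y t i $ l $ k\<bar> \<le> B + G" for t i
    using component_dist_average_le_spread[of "y t" i l k t] y_weighted_average_le[OF G, of t] B[of t]
    by linarith
  thus ?thesis by blast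
qed

lemma y_bounded:
  obtains Y where "\<And>t i l. norm (y t i $ l) \<le> Y"
proof -
  obtain Yc where Yc: "\<And>t i l k. \<bar>y t i $ l $ k\<bar> \<le> Yc l k"
    using y_component_bounded by metis
  define Y where "Y = Max (range (\<lambda>l. \<Sum>k\<in>UNIV. Yc l k))"
  have "norm (y t i $ l) \<le> Y" for t i l
  proof -
    have "norm (y t i $ l) \<le> (\<Sum>k\<in>UNIV. \<bar>y t i $ l $ k\<bar>)" by (rule norm_le_l1_cart)
    also have "\<dots> \<le> (\<Sum>k\<in>UNIV. Yc l k)" by (intro sum_mono Yc)
    also have "\<dots> \<le> Y" unfolding Y_def by (rule Max_ge) auto
    finally show ?thesis .
  qed
  thus thesis by (rule that)
qed

lemma local_step_bounded:
  obtains D where "0 \<le> D" and "\<And>t i. norm (xtil t i - x t i $ sel t i) \<le> D"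
proof -
  obtain Y where Y: "\<And>t i l. norm (y t i $ l) \<le> Y" using y_bounded by metis
  obtain Cr where Cr: "\<And>l z s. z \<in> K l \<Longrightarrow> \<forall>w. r l w \<ge> r l z + inner s (w - z) \<Longrightarrow> norm s \<le> Cr l"
    using r_subgrad unfolding bounded_subgradients_on_def by metis
  define N where "N = real CARD('n)"
  define D where "D = Max (range (\<lambda>(i, l). 4 * (N * Y + Cr l) / tau i))"
  have "norm (xtil t i - x t i $ sel t i) \<le> D" for t i
  proof -
    define l where "l = sel t i"
    have w: "x t i \<in> blockset K" by (rule x_in_blockset)
    hence p: "x t i $ l \<in> K l" by (simp add: blockset_def)
    obtain s where s: "\<And>w. r l (x t i $ l) + inner s (w - x t i $ l) \<le> r l w"
      using convex_on_UNIV_has_subgradient[OF r_convex] by blast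
    have s_le: "norm s \<le> Cr l" by (rule Cr[OF p]) (use s in auto)
    have minimal: "\<And>z. z \<in> K l \<Longrightarrow>
        ftil i l (xtil t i) (x t i) + inner (N *\<^sub>R y t i $ l - gradf i (x t i) $ l) (xtil t i - x t i $ l)
          + r l (xtil t i)
        \<le> ftil i l z (x t i) + inner (N *\<^sub>R y t i $ l - gradf i (x t i) $ l) (z - x t i $ l) + r l z"
      using xtil_min unfolding l_def N_def by blast
    have "norm (xtil t i - x t i $ l)
        \<le> 4 * (norm (gradf i (x t i) $ l + (N *\<^sub>R y t i $ l - gradf i (x t i) $ l)) + Cr l) / tau i"
      using xtil_in[of t i] unfolding l_def[symmetric]
      by (intro strongly_convex_minimiser_dist_le[OF ftil_sc[OF w] tau_pos p _ ftil_deriv[OF w]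
            r_convex s s_le minimal])
    also have "\<dots> \<le> 4 * (N * Y + Cr l) / tau i"
      using Y[of t i l] tau_pos[of i] by (intro divide_right_mono) (auto simp: N_def)
    also have "\<dots> \<le> D" unfolding D_def by (rule Max_ge) auto
    finally show ?thesis by (simp add: l_def)
  qed
  moreover from this have "0 \<le> D" by (meson norm_ge_zero order_trans)
  ultimately show thesis using that by blast
qed

lemma x_consensus:
  obtains C lam where "0 < lam" "lam < 1" "0 \<le> C"
    and "\<And>t l k. spread (profile (x t) l k) \<le> C * damped_sum lam gamma t"
proof -
  obtain D where D: "0 \<le> D" "\<And>t i. norm (xtil t i - x t i $ sel t i) \<le> D"
    using local_step_bounded by metis
  have each: "\<exists>C lam. 0 < lam \<and> lam < 1 \<and> 0 \<le> C \<and>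
          (\<forall>t. spread (profile (x t) (fst p) (snd p)) \<le> C * damped_sum lam gamma t)" for p
  proof -
    obtain l k where p: "p = (l, k)" by (cases p)
    obtain W eta where win: "0 < W" "0 < eta" "\<And>s i j. eta \<le> backward_prod (mixing_matrix l) s (s + W) $ i $ j"
      using mixing_matrix_window_positive by metis
    define e where "e t = (\<chi> j. gamma t * (if l = sel t j then (xtil t j - x t j $ l) $ k else 0))" for t
    have e_le: "\<bar>e t $ j\<bar> \<le> D * gamma t" for t j
    proof (cases "l = sel t j")
      case True
      have "\<bar>(xtil t j - x t j $ l) $ k\<bar> \<le> D"
        by (rule order_trans[OF component_le_norm_cart]) (use D(2)[of t j] True in simp)
      thus ?thesis using True gamma_pos[of t] by (simp add: e_def abs_mult mult.commute mult_left_mono)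
    qed (use D(1) gamma_pos[of t] in \<open>simp add: e_def\<close>)
    have rec: "profile (x (Suc t)) l k = mixing_matrix l t *v (profile (x t) l k + e t)" for t
      unfolding e_def by (rule x_profile_recursion)
    show ?thesis unfolding p fst_conv snd_conv
      by (rule perturbed_consensus_spread_le[where P = "mixing_matrix l",
            OF mixing_matrix_row_stochastic win rec e_le D(1) less_imp_le[OF gamma_pos]]) blast
  qed
  show thesis
  proof (rule damped_sum_bound_uniform[OF less_imp_le[OF gamma_pos] each])
    fix C lam assume "0 < lam" "lam < 1" "0 \<le> C"
      and bound: "\<And>p t. spread (profile (x t) (fst p) (snd p)) \<le> C * damped_sum lam gamma t"
    have "spread (profile (x t) l k) \<le> C * damped_sum lam gamma t" for t l k
      using bound[where p = "(l, k)" and t = t] by simp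
    with \<open>0 < lam\<close> \<open>lam < 1\<close> \<open>0 \<le> C\<close> show thesis by (rule that)
  qed
qed

lemma dist_weighted_average_le:
  obtains C lam where "0 < lam" "lam < 1" "0 \<le> C"
    and "\<And>t i. norm (x t i - (1 / real CARD('n)) *\<^sub>R (\<chi> l. \<Sum>j\<in>UNIV. phi t j l *\<^sub>R (x t j $ l)))
                 \<le> C * damped_sum lam gamma t"
proof -
  obtain C lam where C: "0 < lam" "lam < 1" "0 \<le> C"
    "\<And>t l k. spread (profile (x t) l k) \<le> C * damped_sum lam gamma t"
    using x_consensus by metis
  have bound: "norm (x t i - (1 / real CARD('n)) *\<^sub>R (\<chi> l. \<Sum>j\<in>UNIV. phi t j l *\<^sub>R (x t j $ l)))
        \<le> (real CARD('b) * real CARD('d) * C) * damped_sum lam gamma t" for t i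
  proof -
    have "norm (x t i - (1 / real CARD('n)) *\<^sub>R (\<chi> l. \<Sum>j\<in>UNIV. phi t j l *\<^sub>R (x t j $ l)))
        \<le> (\<Sum>l\<in>UNIV. \<Sum>k\<in>UNIV. \<bar>(x t i - (1 / real CARD('n)) *\<^sub>R
              (\<chi> l. \<Sum>j\<in>UNIV. phi t j l *\<^sub>R (x t j $ l))) $ l $ k\<bar>)"
      by (rule norm_le_sum_abs_components)
    also have "\<dots> = (\<Sum>l\<in>UNIV. \<Sum>k\<in>UNIV.
        \<bar>x t i $ l $ k - (1 / real CARD('n)) * (\<Sum>j\<in>UNIV. phi t j l * x t j $ l $ k)\<bar>)"
      by (simp only: vector_minus_component average_component)
    also have "\<dots> \<le> (\<Sum>l\<in>(UNIV::'b set). \<Sum>k\<in>(UNIV::'d set). C * damped_sum lam gamma t)"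
      using component_dist_average_le_spread C(4) by (intro sum_mono) (meson order_trans)
    finally show ?thesis by simp
  qed
  moreover have "0 \<le> real CARD('b) * real CARD('d) * C" using C(3) by simp
  ultimately show thesis using C(1,2) by (intro that)
qed

end

theorem mainTheorem5:
  fixes f :: "'n::finite \<Rightarrow> (real^'d::finite)^'b::finite \<Rightarrow> real"
    and gradf :: "'n \<Rightarrow> (real^'d)^'b \<Rightarrow> (real^'d)^'b"
    and L :: "'n \<Rightarrow> real"
    and r :: "'b \<Rightarrow> real^'d \<Rightarrow> real"
    and K :: "'b \<Rightarrow> (real^'d) set"
    and E :: "('n \<times> 'n) set"
    and sel :: "nat \<Rightarrow> 'n \<Rightarrow> 'b"
    and a :: "nat \<Rightarrow> 'b \<Rightarrow> 'n \<Rightarrow> 'n \<Rightarrow> real"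
    and \<kappa> :: real
    and ftil :: "'n \<Rightarrow> 'b \<Rightarrow> real^'d \<Rightarrow> (real^'d)^'b \<Rightarrow> real"
    and gftil :: "'n \<Rightarrow> 'b \<Rightarrow> real^'d \<Rightarrow> (real^'d)^'b \<Rightarrow> real^'d"
    and tau :: "'n \<Rightarrow> real"
    and gamma :: "nat \<Rightarrow> real"
    and x y :: "nat \<Rightarrow> 'n \<Rightarrow> (real^'d)^'b"
    and phi :: "nat \<Rightarrow> 'n \<Rightarrow> 'b \<Rightarrow> real"
    and xtil :: "nat \<Rightarrow> 'n \<Rightarrow> real^'d"
  defines "Kset \<equiv> blockset K"
  assumes K_ne: "\<And>l. K l \<noteq> {}"
    and K_closed: "\<And>l. closed (K l)"
    and K_convex: "\<And>l. convex (K l)"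
    and f_C1: "\<And>i. \<exists>Op. open Op \<and> Kset \<subseteq> Op \<and>
                 (\<forall>z\<in>Op. (f i has_derivative (\<lambda>h. inner (gradf i z) h)) (at z)) \<and>
                 continuous_on Op (gradf i)"
    and gradf_lip: "\<And>i u v. u \<in> Kset \<Longrightarrow> v \<in> Kset \<Longrightarrow>
                 norm (gradf i u - gradf i v) \<le> L i * norm (u - v)"
    and gradf_bdd: "\<And>i. bounded (gradf i ` Kset)"
    and r_convex: "\<And>l. convex_on UNIV (r l)"
    and r_subgrad: "\<And>l. bounded_subgradients_on (K l) (r l)"
    and U_coercive: "coercive_on Kset (\<lambda>z. (\<Sum>i\<in>UNIV. f i z) + (\<Sum>l\<in>UNIV. r l (z $ l)))"
    and E_loops: "\<And>i. (i, i) \<in> E"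
    and E_strong: "\<And>i j. (i, j) \<in> E\<^sup>*"
    and sel_ess_cyclic: "\<And>i. \<exists>T>0. \<forall>t. {sel (t + s) i | s. s < T} = UNIV"
    and kappa_pos: "\<kappa> > 0"
    and a_pos: "\<And>t l i j. (j, i) \<in> edges_blk E sel t l \<Longrightarrow> a t l i j > \<kappa>"
    and a_zero: "\<And>t l i j. (j, i) \<notin> edges_blk E sel t l \<Longrightarrow> a t l i j = 0"
    and a_colstoch: "\<And>t l j. (\<Sum>i\<in>UNIV. a t l i j) = 1"
    and tau_pos: "\<And>i. tau i > 0"
    and ftil_deriv: "\<And>i l w z. w \<in> Kset \<Longrightarrow> z \<in> K l \<Longrightarrow>
                 ((\<lambda>v. ftil i l v w) has_derivative (\<lambda>h. inner (gftil i l z w) h)) (at z within K l)"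
    and ftil_C1: "\<And>i l w. w \<in> Kset \<Longrightarrow> continuous_on (K l) (\<lambda>z. gftil i l z w)"
    and ftil_sc: "\<And>i l w. w \<in> Kset \<Longrightarrow> strongly_convex_with (K l) (tau i) (\<lambda>v. ftil i l v w)"
    and ftil_grad: "\<And>i l w. w \<in> Kset \<Longrightarrow> gftil i l (w $ l) w = gradf i w $ l"
    and ftil_lip: "\<And>i l. \<exists>C. \<forall>z\<in>K l. \<forall>u\<in>Kset. \<forall>v\<in>Kset.
                 norm (gftil i l z u - gftil i l z v) \<le> C * norm (u - v)"
    and gamma_pos: "\<And>t. 0 < gamma t"
    and gamma_le1: "\<And>t. gamma t \<le> 1"
    and gamma_mono: "\<And>t. gamma (Suc t) \<le> gamma t"
    and gamma_nsum: "\<not> summable gamma"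
    and gamma_sq: "summable (\<lambda>t. (gamma t)\<^sup>2)"
    and x0: "\<And>i. x 0 i \<in> Kset"
    and y0: "\<And>i. y 0 i = gradf i (x 0 i)"
    and phi0: "\<And>i l. phi 0 i l = 1"
    and xtil_in: "\<And>t i. xtil t i \<in> K (sel t i)"
    and xtil_min: "\<And>t i z. z \<in> K (sel t i) \<Longrightarrow>
          ftil i (sel t i) (xtil t i) (x t i)
            + inner (real CARD('n) *\<^sub>R (y t i $ sel t i) - gradf i (x t i) $ sel t i)
                    (xtil t i - x t i $ sel t i)
            + r (sel t i) (xtil t i)
          \<le> ftil i (sel t i) z (x t i)
            + inner (real CARD('n) *\<^sub>R (y t i $ sel t i) - gradf i (x t i) $ sel t i)
                    (z - x t i $ sel t i)
            + r (sel t i) z"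
    and phi_upd: "\<And>t i l. phi (Suc t) i l = (\<Sum>j\<in>nbr E sel t i l. a t l i j * phi t j l)"
    and x_upd: "\<And>t i l. x (Suc t) i $ l =
          (\<Sum>j\<in>nbr E sel t i l. (a t l i j * phi t j l / phi (Suc t) i l) *\<^sub>R
              (x t j $ l + gamma t *\<^sub>R
                 (if l = sel t j then xtil t j - x t j $ l else 0)))"
    and y_upd: "\<And>t i l. y (Suc t) i $ l =
          (\<Sum>j\<in>nbr E sel t i l. (a t l i j / phi (Suc t) i l) *\<^sub>R
              (phi t j l *\<^sub>R (y t j $ l) + gradf j (x (Suc t) j) $ l - gradf j (x t j) $ l))"
  shows "\<forall>i. let sbar = (\<lambda>t. (1 / real CARD('n)) *\<^sub>R (\<chi> l. \<Sum>j\<in>UNIV. phi t j l *\<^sub>R (x t j $ l)))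
             in ((\<lambda>t. norm (x t i - sbar t)) \<longlonglongrightarrow> 0)
              \<and> summable (\<lambda>t. gamma t * norm (x t i - sbar t))
              \<and> summable (\<lambda>t. (norm (x t i - sbar t))\<^sup>2)"
proof -
  have ftil_deriv_block:
    "((\<lambda>v. ftil i l v w) has_derivative (\<lambda>h. inner (gradf i w $ l) h)) (at (w $ l) within K l)"
    if "w \<in> blockset K" for i l w
    using that ftil_deriv[where w = w and z = "w $ l" and i = i and l = l]
      ftil_grad[where w = w and i = i and l = l]
    by (simp add: Kset_def blockset_def)
  interpret block_tracking E sel a \<kappa> phi K r gradf ftil tau gamma x y xtil
    by (unfold_locales; (fact E_loops E_strong sel_ess_cyclic kappa_pos a_pos a_zero a_colstoch phi0
          phi_upd K_convex gradf_bdd[unfolded Kset_def] r_convex r_subgrad tau_pos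
          ftil_sc[unfolded Kset_def] ftil_deriv_block gamma_pos gamma_le1 x0[unfolded Kset_def] y0
          xtil_in xtil_min x_upd y_upd)?)
  have "decseq gamma" using gamma_mono by (simp add: decseq_SucI)
  show ?thesis
  proof (rule dist_weighted_average_le)
    fix C lam assume "0 < lam" "lam < 1" "0 \<le> C"
      and "\<And>t i. norm (x t i - (1 / real CARD('n)) *\<^sub>R (\<chi> l. \<Sum>j\<in>UNIV. phi t j l *\<^sub>R (x t j $ l)))
                 \<le> C * damped_sum lam gamma t"
    from damped_sum_bound_summable[OF this(1,2) gamma_pos gamma_le1 \<open>decseq gamma\<close> gamma_sq this(3)
        norm_ge_zero this(4)]
    show ?thesis by (simp add: Let_def)
  qed
qed

end
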